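(* For all $m,k\in\mathbb Z$, $$[\overline{\mathfrak g}'_{(m)},\overline{\mathfrak g}'_{(k)}]\subseteq\overline{\mathfrak g}'_{(m+k)} .$$ Moreover, let $X,Y\in\mathfrak g$, $k,m\in\mathbb Z$, $s,p\in\{1,\dots,N\}$, and for $Z\in\mathfrak g$, $j\in\mathbb Z$, $t\in\{1,\dots,N\}$ let $Z_{j,t}$ denote any element of $\overline{\mathfrak g}$ with $Z_{j,t}(z_q)=\delta^t_qZz_q^j+O(z_q^{j+1})$ for all $q=1,\dots,N$. Then $$[X_{k,s},Y_{m,p}]-\delta_s^p\,[X,Y]_{k+m,s}\in\overline{\mathfrak g}'_{(k+m+1)} .$$
   Context: Let $\Sigma$ be a compact Riemann surface of genus $g$ and $A\subset\Sigma$ a finite set split into two disjoint non-empty subsets $I=\{P_1,\dots,P_N\}$ and $O=\{Q_1,\dots,Q_M\}$. Let $\mathfrak g$ be one of the complex matrix Lie algebras $\mathfrak{gl}(n)$, $\mathfrak{sl}(n)$, $\mathfrak{so}(n)$, or $\mathfrak{sp}(2n)=\{X: X^t\sigma+\sigma X=0\}$ for a fixed non-degenerate skew-symmetric matrix $\sigma$. Tyurin data: an integer $K\ge 0$, distinct points $\gamma_1,\dots,\gamma_K\in\Sigma\setminus A$ (the set $W$) and vectors $\alpha_s\in\mathbb C^n$ ($\mathbb C^{2n}$ for $\mathfrak{sp}$), with $\alpha_s^t\alpha_s=0$ in the $\mathfrak{so}$ case. Fix local coordinates $w_s$ centred at $\gamma_s$ and $z_p$ centred at $P_p$. The Lax operator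 algebra $\overline{\mathfrak g}$ is the set of meromorphic maps $L:\Sigma\to\mathfrak g$, holomorphic on $\Sigma\setminus(A\cup W)$, such that for each $s$: ($\mathfrak{gl}$) $L=L_{s,-1}w_s^{-1}+\sum_{k\ge0}L_{s,k}w_s^k$ near $\gamma_s$ with $\beta_s\in\mathbb C^n,\kappa_s\in\mathbb C$ such that $L_{s,-1}=\alpha_s\beta_s^t$, $\beta_s^t\alpha_s=0$, $L_{s,0}\alpha_s=\kappa_s\alpha_s$; ($\mathfrak{sl}$) the same with all $L_{s,k}$ traceless; ($\mathfrak{so}$) the same expansion with all $L_{s,k}$ skew-symmetric, $L_{s,-1}=\alpha_s\beta_s^t-\beta_s\alpha_s^t$, $\beta_s^t\alpha_s=0$, $L_{s,0}\alpha_s=\kappa_s\alpha_s$; ($\mathfrak{sp}$) $L=L_{s,-2}w_s^{-2}+L_{s,-1}w_s^{-1}+\sum_{k\ge0}L_{s,k}w_s^k$ with $\beta_s,\nu_s,\kappa_s$ such that $L_{s,-2}=\nu_s\alpha_s\alpha_s^t\sigma$, $L_{s,-1}=(\alpha_s\beta_s^t+\beta_s\alpha_s^t)\sigma$, $\beta_s^t\sigma\alpha_s=0$, $L_{s,0}\alpha_s=\kappa_s\alpha_s$, $\alpha_s^t\sigma L_{s,1}\alpha_s=0$. It is a Lie algebra under the pointwise commutator. For a matrix-valued meromorphic $L$ and a point $P$, $\mathrm{ord}_P(L)$ is the minimum of the orders at $P$ of the entries of $L$. Set $\overline{\mathfrak g}'_{(m)}:=\{L\in\overline{\mathfrak g}:\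 \mathrm{ord}_{P_s}(L)\ge m \text{ for all } s=1,\dots,N\}$. *)

theory Defs
  imports "HOL-Complex_Analysis.Complex_Analysis"
begin

definition is_chart :: "'s::topological_space set \<Rightarrow> ('s \<Rightarrow> complex) \<Rightarrow> bool" where
  "is_chart U \<phi> \<longleftrightarrow> open U \<and> open (\<phi> ` U) \<and> (\<exists>\<psi>. homeomorphism U (\<phi> ` U) \<phi> \<psi>)"

definition charts_compatible :: "'s::topological_space set \<Rightarrow> ('s \<Rightarrow> complex) \<Rightarrow>
    's set \<Rightarrow> ('s \<Rightarrow> complex) \<Rightarrow> bool" where
  "charts_compatible U \<phi> V \<psi> \<longleftrightarrow>
     (\<psi> \<circ> inv_into U \<phi>) holomorphic_on (\<phi> ` (U \<inter> V)) \<and>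
     (\<phi> \<circ> inv_into V \<psi>) holomorphic_on (\<psi> ` (U \<inter> V))"

definition compact_riemann_surface :: "('s::t2_space set \<times> ('s \<Rightarrow> complex)) set \<Rightarrow> bool" where
  "compact_riemann_surface atlas \<longleftrightarrow>
     compact (UNIV :: 's set) \<and> connected (UNIV :: 's set) \<and>
     (\<forall>(U, \<phi>)\<in>atlas. is_chart U \<phi>) \<and>
     (\<Union>(fst ` atlas) = UNIV) \<and>
     (\<forall>(U, \<phi>)\<in>atlas. \<forall>(V, \<psi>)\<in>atlas. charts_compatible U \<phi> V \<psi>)"

definition compatible_chart :: "('s::topological_space set \<times> ('s \<Rightarrow> complex)) set \<Rightarrow>
    's set \<Rightarrow> ('s \<Rightarrow> complex) \<Rightarrow> bool" where
  "compatible_chart atlas U \<phi> \<longleftrightarrow> is_chart U \<phi> \<and>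
     (\<forall>(V, \<psi>)\<in>atlas. charts_compatible U \<phi> V \<psi>)"

definition local_coordinate_at :: "('s::topological_space set \<times> ('s \<Rightarrow> complex)) set \<Rightarrow>
    's \<Rightarrow> 's set \<times> ('s \<Rightarrow> complex) \<Rightarrow> bool" where
  "local_coordinate_at atlas P c \<longleftrightarrow>
     compatible_chart atlas (fst c) (snd c) \<and> P \<in> fst c \<and> snd c P = 0"

type_synonym 'n mat = "complex^'n^'n"

definition cmat :: "complex \<Rightarrow> 'n::finite mat \<Rightarrow> 'n mat" where
  "cmat c M = (\<chi> i j. c * M $ i $ j)"

definition outer :: "complex^'n \<Rightarrow> complex^'n \<Rightarrow> 'n::finite mat" where
  "outer a b = (\<chi> i j. a $ i * b $ j)"

definition bil :: "complex^'n::finite \<Rightarrow> complex^'n \<Rightarrow> complex" where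
  "bil a b = (\<Sum>i\<in>UNIV. a $ i * b $ i)"

definition comm :: "'n::finite mat \<Rightarrow> 'n mat \<Rightarrow> 'n mat" where
  "comm X Y = X ** Y - Y ** X"

text \<open>This includes the case of entries vanishing identically (order +infinity).\<close>

definition ord0_ge :: "(complex \<Rightarrow> 'n::finite mat) \<Rightarrow> int \<Rightarrow> bool" where
  "ord0_ge F m \<longleftrightarrow> (\<forall>i j. \<exists>h. h analytic_on {0} \<and>
       (\<forall>\<^sub>F \<zeta> in at 0. F \<zeta> $ i $ j = \<zeta> powi m * h \<zeta>))"

definition in_coord :: "'s set \<times> ('s \<Rightarrow> complex) \<Rightarrow> ('s \<Rightarrow> 'b) \<Rightarrow> complex \<Rightarrow> 'b" where
  "in_coord c L = (\<lambda>\<zeta>. L (inv_into (fst c) (snd c) \<zeta>))"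

definition ord_ge :: "'s set \<times> ('s \<Rightarrow> complex) \<Rightarrow> ('s \<Rightarrow> 'n::finite mat) \<Rightarrow> int \<Rightarrow> bool" where
  "ord_ge c L m \<longleftrightarrow> ord0_ge (in_coord c L) m"

definition holomorphic_at :: "('s::topological_space set \<times> ('s \<Rightarrow> complex)) set \<Rightarrow>
    ('s \<Rightarrow> 'n::finite mat) \<Rightarrow> 's \<Rightarrow> bool" where
  "holomorphic_at atlas L p \<longleftrightarrow> (\<exists>(U, \<phi>)\<in>atlas. p \<in> U \<and>
     (\<forall>i j. (\<lambda>\<zeta>. L (inv_into U \<phi> \<zeta>) $ i $ j) analytic_on {\<phi> p}))"

definition meromorphic_at :: "('s::topological_space set \<times> ('s \<Rightarrow> complex)) set \<Rightarrow>
    ('s \<Rightarrow> 'n::finite mat) \<Rightarrow> 's \<Rightarrow> bool" where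
  "meromorphic_at atlas L p \<longleftrightarrow> (\<exists>(U, \<phi>)\<in>atlas. p \<in> U \<and>
     (\<forall>i j. (\<lambda>\<zeta>. L (inv_into U \<phi> \<zeta>) $ i $ j) meromorphic_on {\<phi> p}))"

datatype lie_kind = GL | SL | SO | SP

definition in_lie :: "lie_kind \<Rightarrow> 'n::finite mat \<Rightarrow> 'n mat \<Rightarrow> bool" where
  "in_lie kd \<sigma> X \<longleftrightarrow> (case kd of
      GL \<Rightarrow> True
    | SL \<Rightarrow> trace X = 0
    | SO \<Rightarrow> transpose X = - X
    | SP \<Rightarrow> transpose X ** \<sigma> + \<sigma> ** X = 0)"

text \<open>The expansion is written as
  L = L_{-2} w^-2 + L_{-1} w^-1 + L_0 + L_1 w + O(w^2) (sp) resp.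
  L = L_{-1} w^-1 + L_0 + O(w) (other cases).\<close>

definition tyurin_cond :: "lie_kind \<Rightarrow> 'n::finite mat \<Rightarrow> 's set \<times> ('s \<Rightarrow> complex) \<Rightarrow>
    complex^'n \<Rightarrow> ('s \<Rightarrow> 'n mat) \<Rightarrow> bool" where
  "tyurin_cond kd \<sigma> c \<alpha> L \<longleftrightarrow> (let F = in_coord c L in
     (case kd of
       SP \<Rightarrow> (\<exists>\<beta> \<nu> \<kappa> L0 L1.
               bil \<beta> (\<sigma> *v \<alpha>) = 0 \<and> L0 *v \<alpha> = \<kappa> *s \<alpha> \<and> bil \<alpha> (\<sigma> *v (L1 *v \<alpha>)) = 0 \<and>
               ord0_ge (\<lambda>\<zeta>. F \<zeta> - cmat (inverse (\<zeta>^2)) (cmat \<nu> (outer \<alpha> \<alpha> ** \<sigma>))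
                            - cmat (inverse \<zeta>) ((outer \<alpha> \<beta> + outer \<beta> \<alpha>) ** \<sigma>)
                            - L0 - cmat \<zeta> L1) 2)
     | SO \<Rightarrow> (\<exists>\<beta> \<kappa> L0. bil \<beta> \<alpha> = 0 \<and> L0 *v \<alpha> = \<kappa> *s \<alpha> \<and>
               ord0_ge (\<lambda>\<zeta>. F \<zeta> - cmat (inverse \<zeta>) (outer \<alpha> \<beta> - outer \<beta> \<alpha>) - L0) 1)
     | _ \<Rightarrow> (\<exists>\<beta> \<kappa> L0. bil \<beta> \<alpha> = 0 \<and> L0 *v \<alpha> = \<kappa> *s \<alpha> \<and>
               ord0_ge (\<lambda>\<zeta>. F \<zeta> - cmat (inverse \<zeta>) (outer \<alpha> \<beta>) - L0) 1)))"

text \<open>The Lax operator algebra: g-valued meromorphic maps, holomorphic off A \<union> W,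
  satisfying the Tyurin conditions at gamma_1..gamma_K (values at the poles are irrelevant).\<close>

definition lax_algebra :: "('s::topological_space set \<times> ('s \<Rightarrow> complex)) set \<Rightarrow> lie_kind \<Rightarrow>
    'n::finite mat \<Rightarrow> 's set \<Rightarrow> nat \<Rightarrow> (nat \<Rightarrow> 's) \<Rightarrow> (nat \<Rightarrow> complex^'n) \<Rightarrow>
    (nat \<Rightarrow> 's set \<times> ('s \<Rightarrow> complex)) \<Rightarrow> ('s \<Rightarrow> 'n mat) set" where
  "lax_algebra atlas kd \<sigma> A K \<gamma> \<alpha> wc = {L.
     (\<forall>x. x \<notin> A \<union> \<gamma> ` {1..K} \<longrightarrow> in_lie kd \<sigma> (L x) \<and> holomorphic_at atlas L x) \<and>
     (\<forall>x\<in>A \<union> \<gamma> ` {1..K}. meromorphic_at atlas L x) \<and>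
     (\<forall>s\<in>{1..K}. tyurin_cond kd \<sigma> (wc s) (\<alpha> s) L)}"

definition lax_filt :: "('s::topological_space set \<times> ('s \<Rightarrow> complex)) set \<Rightarrow> lie_kind \<Rightarrow>
    'n::finite mat \<Rightarrow> 's set \<Rightarrow> nat \<Rightarrow> (nat \<Rightarrow> 's) \<Rightarrow> (nat \<Rightarrow> complex^'n) \<Rightarrow>
    (nat \<Rightarrow> 's set \<times> ('s \<Rightarrow> complex)) \<Rightarrow> nat \<Rightarrow> (nat \<Rightarrow> 's set \<times> ('s \<Rightarrow> complex)) \<Rightarrow>
    int \<Rightarrow> ('s \<Rightarrow> 'n mat) set" where
  "lax_filt atlas kd \<sigma> A K \<gamma> \<alpha> wc N zc m =
     {L \<in> lax_algebra atlas kd \<sigma> A K \<gamma> \<alpha> wc. \<forall>s\<in>{1..N}. ord_ge (zc s) L m}"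

definition is_Z :: "('s::topological_space set \<times> ('s \<Rightarrow> complex)) set \<Rightarrow> lie_kind \<Rightarrow>
    'n::finite mat \<Rightarrow> 's set \<Rightarrow> nat \<Rightarrow> (nat \<Rightarrow> 's) \<Rightarrow> (nat \<Rightarrow> complex^'n) \<Rightarrow>
    (nat \<Rightarrow> 's set \<times> ('s \<Rightarrow> complex)) \<Rightarrow> nat \<Rightarrow> (nat \<Rightarrow> 's set \<times> ('s \<Rightarrow> complex)) \<Rightarrow>
    'n mat \<Rightarrow> int \<Rightarrow> nat \<Rightarrow> ('s \<Rightarrow> 'n mat) \<Rightarrow> bool" where
  "is_Z atlas kd \<sigma> A K \<gamma> \<alpha> wc N zc Z j t Zf \<longleftrightarrow>
     Zf \<in> lax_algebra atlas kd \<sigma> A K \<gamma> \<alpha> wc \<and>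
     (\<forall>q\<in>{1..N}. ord_ge (zc q)
        (\<lambda>x. Zf x - (if q = t then cmat (snd (zc q) x powi j) Z else 0)) (j + 1))"

end

theory Submission
  imports Defs
begin

text \<open>Orders at a point are additive under matrix products, so the commutator of elements of
  order at least \<open>m\<close> and \<open>k\<close> has order at least \<open>m + k\<close>, and comparing leading terms gives
  the second statement. The substance is that the Lax operator algebra is closed under
  commutators: at a Tyurin point one multiplies the Laurent expansions of the two factors, and
  the constraints on their leading coefficients (\<open>\<beta>\<^sup>t\<alpha> = 0\<close>, \<open>L\<^sub>0\<alpha> = \<kappa>\<alpha>\<close>,
  \<open>\<alpha>\<^sup>t\<sigma>L\<^sub>1\<alpha> = 0\<close>, and the Lie algebra conditions, which every coefficient inherits) force
  the corresponding coefficients of the commutator into the same shape.\<close>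

section \<open>Matrix algebra\<close>

lemma cmat_zero_left [simp]: "cmat 0 A = 0"
  by (simp add: cmat_def vec_eq_iff)
lemma cmat_one [simp]: "cmat 1 A = A"
  by (simp add: cmat_def vec_eq_iff)
lemma cmat_zero_right [simp]: "cmat c 0 = 0"
  by (simp add: cmat_def vec_eq_iff)
lemma cmat_entry [simp]: "cmat c M $ i $ j = c * M $ i $ j"
  by (simp add: cmat_def)
lemma cmat_cmat [simp]: "cmat c (cmat d A) = cmat (c * d) A"
  by (simp add: cmat_def vec_eq_iff)
lemma cmat_mult_left [simp]: "cmat c A ** B = cmat c (A ** B)"
  by (simp add: cmat_def vec_eq_iff matrix_matrix_mult_def sum_distrib_left algebra_simps)
lemma cmat_mult_right [simp]: "A ** cmat c B = cmat c (A ** B)"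
  by (simp add: cmat_def vec_eq_iff matrix_matrix_mult_def sum_distrib_left algebra_simps)
lemma cmat_add_left: "cmat (c + d) A = cmat c A + cmat d A"
  by (simp add: cmat_def vec_eq_iff algebra_simps)
lemma cmat_diff_left: "cmat (c - d) A = cmat c A - cmat d A"
  by (simp add: cmat_def vec_eq_iff algebra_simps)
lemma cmat_uminus_left: "cmat (- c) A = - cmat c A"
  by (simp add: cmat_def vec_eq_iff)
lemma cmat_add: "cmat c (A + B) = cmat c A + cmat c B"
  by (simp add: cmat_def vec_eq_iff algebra_simps)
lemma cmat_diff: "cmat c (A - B) = cmat c A - cmat c B"
  by (simp add: cmat_def vec_eq_iff algebra_simps)
lemma cmat_uminus: "cmat c (- A) = - cmat c A"
  by (simp add: cmat_def vec_eq_iff)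
lemma cmat_two: "cmat 2 A = A + A"
  by (simp add: cmat_def vec_eq_iff ring_distribs(2)[symmetric])
lemma cmat_sum: "cmat c (sum f S) = (\<Sum>x\<in>S. cmat c (f x))"
  by (induction S rule: infinite_finite_induct) (auto simp: cmat_add)
lemma cmat_matrix_vector_mult: "cmat c M *v v = c *s (M *v v)"
  by (simp add: cmat_def vec_eq_iff matrix_vector_mult_def sum_distrib_left algebra_simps)
lemma transpose_cmat: "transpose (cmat c M) = cmat c (transpose M)"
  by (simp add: cmat_def vec_eq_iff transpose_def)

lemma transpose_diff: "transpose (A - B) = transpose A - transpose B"
  by (simp add: transpose_def vec_eq_iff)

lemma matrix_diff_ldistrib: "(A::'a::ring_1^'n^'m) ** (B - C) = A ** B - A ** C"
  by (simp add: matrix_matrix_mult_def vec_eq_iff sum_subtractf algebra_simps)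
lemma matrix_diff_rdistrib: "((A::'a::ring_1^'n^'m) - B) ** C = A ** C - B ** C"
  by (simp add: matrix_matrix_mult_def vec_eq_iff sum_subtractf algebra_simps)
lemma matrix_add_rdistrib: "((A::'a::ring_1^'n^'m) + B) ** C = A ** C + B ** C"
  by (simp add: matrix_matrix_mult_def vec_eq_iff sum.distrib algebra_simps)
lemma matrix_uminus_left: "(- (A::'a::ring_1^'n^'m)) ** C = - (A ** C)"
  by (simp add: matrix_matrix_mult_def vec_eq_iff sum_negf)
lemma matrix_uminus_right: "(A::'a::ring_1^'n^'m) ** (- C) = - (A ** C)"
  by (simp add: matrix_matrix_mult_def vec_eq_iff sum_negf)
lemma matrix_sum_left: "(sum f S :: 'a::ring_1^'n^'m) ** C = (\<Sum>x\<in>S. f x ** C)"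
  by (induction S rule: infinite_finite_induct) (auto simp: matrix_add_rdistrib)
lemma matrix_sum_right: "(C :: 'a::ring_1^'n^'m) ** sum f S = (\<Sum>x\<in>S. C ** f x)"
  by (induction S rule: infinite_finite_induct) (auto simp: matrix_add_ldistrib)

lemma matrix_vector_mult_uminus_left: "(- A) *v v = - (A *v (v :: 'a::ring_1^'n))"
  by (simp add: matrix_vector_mult_def vec_eq_iff sum_negf)
lemma matrix_vector_mult_uminus_right: "A *v (- v) = - (A *v (v :: 'a::ring_1^'n))"
  by (simp add: matrix_vector_mult_def vec_eq_iff sum_negf)
lemma matrix_vector_mult_smult: "A *v (c *s v) = c *s (A *v (v :: 'a::comm_ring_1^'n))"
  by (simp add: matrix_vector_mult_def vec_eq_iff sum_distrib_left algebra_simps)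

lemma comm_cmat_left: "comm (cmat c X) Y = cmat c (comm X Y)"
  by (simp add: comm_def cmat_diff)
lemma comm_cmat_right: "comm X (cmat c Y) = cmat c (comm X Y)"
  by (simp add: comm_def cmat_diff)
lemma comm_self [simp]: "comm X X = 0"
  by (simp add: comm_def)
lemma comm_zero_left [simp]: "comm 0 X = 0" and comm_zero_right [simp]: "comm X 0 = 0"
  by (simp_all add: comm_def)
lemma comm_anticomm: "comm X Y = - comm Y X"
  by (simp add: comm_def)
lemma comm_entry:
  "comm A B $ i $ j = (\<Sum>k\<in>UNIV. A $ i $ k * B $ k $ j) - (\<Sum>k\<in>UNIV. B $ i $ k * A $ k $ j)"
  by (simp add: comm_def matrix_matrix_mult_def)

lemma outer_matrix_mult: "outer a b ** M = outer a (transpose M *v b)"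
  by (simp add: outer_def vec_eq_iff matrix_matrix_mult_def matrix_vector_mult_def transpose_def
      sum_distrib_left algebra_simps)
lemma matrix_mult_outer: "M ** outer a b = outer (M *v a) b"
  by (simp add: outer_def vec_eq_iff matrix_matrix_mult_def matrix_vector_mult_def
      sum_distrib_left mult_ac)
lemma outer_mult_outer: "outer a b ** outer c d = cmat (bil b c) (outer a d)"
  by (simp add: outer_def bil_def vec_eq_iff matrix_matrix_mult_def sum_distrib_right
      sum_distrib_left algebra_simps)
lemma outer_matrix_vector_mult: "outer a b *v c = bil b c *s a"
  by (simp add: outer_def bil_def vec_eq_iff matrix_vector_mult_def sum_distrib_left
      algebra_simps)
lemma outer_add1: "outer (a + a') b = outer a b + outer a' b"
  by (simp add: outer_def vec_eq_iff algebra_simps)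
lemma outer_add2: "outer a (b + b') = outer a b + outer a b'"
  by (simp add: outer_def vec_eq_iff algebra_simps)
lemma outer_diff1: "outer (a - a') b = outer a b - outer a' b"
  by (simp add: outer_def vec_eq_iff algebra_simps)
lemma outer_diff2: "outer a (b - b') = outer a b - outer a b'"
  by (simp add: outer_def vec_eq_iff algebra_simps)
lemma outer_uminus1: "outer (- a) b = - outer a b"
  by (simp add: outer_def vec_eq_iff)
lemma outer_uminus2: "outer a (- b) = - outer a b"
  by (simp add: outer_def vec_eq_iff)
lemma outer_smult1: "outer (c *s a) b = cmat c (outer a b)"
  by (simp add: outer_def vec_eq_iff algebra_simps)
lemma outer_smult2: "outer a (c *s b) = cmat c (outer a b)"
  by (simp add: outer_def vec_eq_iff algebra_simps)

lemma bil_commute: "bil a b = bil b a"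
  by (simp add: bil_def algebra_simps)
lemma bil_matrix_vector_mult: "bil a (M *v b) = bil (transpose M *v a) b"
  by (simp add: bil_def matrix_vector_mult_def transpose_def sum_distrib_left sum_distrib_right
      algebra_simps) (rule sum.swap)
lemma bil_matrix_vector_mult': "bil (M *v b) a = bil b (transpose M *v a)"
  by (metis bil_matrix_vector_mult bil_commute)
lemma bil_vector_matrix_mult: "bil (x v* M) a = bil x (M *v a)"
  using bil_matrix_vector_mult[of x M a] by simp
lemma bil_add1: "bil (a + a') b = bil a b + bil a' b"
  by (simp add: bil_def sum.distrib algebra_simps)
lemma bil_add2: "bil a (b + b') = bil a b + bil a b'"
  by (simp add: bil_def sum.distrib algebra_simps)
lemma bil_diff1: "bil (a - a') b = bil a b - bil a' b"
  by (simp add: bil_def sum_subtractf algebra_simps)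
lemma bil_diff2: "bil a (b - b') = bil a b - bil a b'"
  by (simp add: bil_def sum_subtractf algebra_simps)
lemma bil_uminus1: "bil (- a) b = - bil a b"
  by (simp add: bil_def sum_negf)
lemma bil_uminus2: "bil a (- b) = - bil a b"
  by (simp add: bil_def sum_negf)
lemma bil_smult1: "bil (c *s a) b = c * bil a b"
  by (simp add: bil_def sum_distrib_left algebra_simps)
lemma bil_smult2: "bil a (c *s b) = c * bil a b"
  by (simp add: bil_def sum_distrib_left algebra_simps)

lemma bil_skew_self:
  assumes "transpose M = - M"
  shows "bil a (M *v a) = 0"
proof -
  have "bil a (M *v a) = - bil (M *v a) a"
    using assms by (simp add: bil_matrix_vector_mult matrix_vector_mult_uminus_left bil_uminus1)
  then show ?thesis by (simp add: bil_commute)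
qed

section \<open>Orders of matrix-valued functions at the origin\<close>

definition mat_analytic0 :: "(complex \<Rightarrow> 'n::finite mat) \<Rightarrow> bool" where
  "mat_analytic0 H \<longleftrightarrow> (\<forall>i j. (\<lambda>\<zeta>. H \<zeta> $ i $ j) analytic_on {0})"

lemma mat_analytic0_const [simp]: "mat_analytic0 (\<lambda>_. C)"
  by (simp add: mat_analytic0_def)
lemma mat_analytic0_add: "mat_analytic0 F \<Longrightarrow> mat_analytic0 G \<Longrightarrow> mat_analytic0 (\<lambda>z. F z + G z)"
  by (auto simp: mat_analytic0_def intro!: analytic_intros)
lemma mat_analytic0_mult: "mat_analytic0 F \<Longrightarrow> mat_analytic0 G \<Longrightarrow> mat_analytic0 (\<lambda>z. F z ** G z)"
  by (auto simp: mat_analytic0_def matrix_matrix_mult_def intro!: analytic_intros)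
lemma mat_analytic0_cmat:
  "f analytic_on {0} \<Longrightarrow> mat_analytic0 G \<Longrightarrow> mat_analytic0 (\<lambda>z. cmat (f z) (G z))"
  by (auto simp: mat_analytic0_def intro!: analytic_intros)
lemma mat_analytic0_transpose: "mat_analytic0 F \<Longrightarrow> mat_analytic0 (\<lambda>z. transpose (F z))"
  by (auto simp: mat_analytic0_def transpose_def)

lemma eventually_at0_nonzero: "eventually (\<lambda>\<zeta>. \<zeta> \<noteq> 0) (at (0::complex))"
  by (simp add: eventually_at_filter)

lemma ord0_ge_iff:
  "ord0_ge F m \<longleftrightarrow>
     (\<exists>H. mat_analytic0 H \<and> eventually (\<lambda>\<zeta>. F \<zeta> = cmat (\<zeta> powi m) (H \<zeta>)) (at 0))"
proof
  assume "ord0_ge F m"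
  then obtain h where h: "\<And>i j. h i j analytic_on {0}"
    "\<And>i j. \<forall>\<^sub>F \<zeta> in at 0. F \<zeta> $ i $ j = \<zeta> powi m * h i j \<zeta>"
    unfolding ord0_ge_def by metis
  have "eventually (\<lambda>\<zeta>. \<forall>i j. F \<zeta> $ i $ j = \<zeta> powi m * h i j \<zeta>) (at 0)"
    by (intro eventually_all_finite) (use h in auto)
  then have "eventually (\<lambda>\<zeta>. F \<zeta> = cmat (\<zeta> powi m) (\<chi> i j. h i j \<zeta>)) (at 0)"
    by eventually_elim (simp add: vec_eq_iff)
  moreover have "mat_analytic0 (\<lambda>\<zeta>. \<chi> i j. h i j \<zeta>)"
    using h by (simp add: mat_analytic0_def)
  ultimately show "\<exists>H. mat_analytic0 H \<and> eventually (\<lambda>\<zeta>. F \<zeta> = cmat (\<zeta> powi m) (H \<zeta>)) (at 0)"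
    by blast
next
  assume "\<exists>H. mat_analytic0 H \<and> eventually (\<lambda>\<zeta>. F \<zeta> = cmat (\<zeta> powi m) (H \<zeta>)) (at 0)"
  then obtain H where H: "mat_analytic0 H" "eventually (\<lambda>\<zeta>. F \<zeta> = cmat (\<zeta> powi m) (H \<zeta>)) (at 0)"
    by blast
  show "ord0_ge F m" unfolding ord0_ge_def
  proof (intro allI exI conjI)
    fix i j
    show "(\<lambda>\<zeta>. H \<zeta> $ i $ j) analytic_on {0}" using H(1) by (simp add: mat_analytic0_def)
    show "\<forall>\<^sub>F \<zeta> in at 0. F \<zeta> $ i $ j = \<zeta> powi m * H \<zeta> $ i $ j"
      using H(2) by eventually_elim simp
  qed
qed

lemma ord0_geI:
  "mat_analytic0 H \<Longrightarrow> eventually (\<lambda>\<zeta>. F \<zeta> = cmat (\<zeta> powi m) (H \<zeta>)) (at 0) \<Longrightarrow> ord0_ge F m"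
  using ord0_ge_iff by blast

lemma ord0_geE:
  assumes "ord0_ge F m"
  obtains H where "mat_analytic0 H" "eventually (\<lambda>\<zeta>. F \<zeta> = cmat (\<zeta> powi m) (H \<zeta>)) (at 0)"
  using assms ord0_ge_iff by blast

lemma ord0_ge_cong:
  assumes "ord0_ge F m" "eventually (\<lambda>\<zeta>. F \<zeta> = G \<zeta>) (at 0)"
  shows "ord0_ge G m"
proof -
  obtain H where H: "mat_analytic0 H" "eventually (\<lambda>\<zeta>. F \<zeta> = cmat (\<zeta> powi m) (H \<zeta>)) (at 0)"
    using assms(1) by (rule ord0_geE)
  show ?thesis
    by (rule ord0_geI[OF H(1)]) (use H(2) assms(2) in \<open>eventually_elim, simp\<close>)
qed

lemma ord0_ge_cong':
  "ord0_ge F m \<Longrightarrow> eventually (\<lambda>\<zeta>. F \<zeta> = G \<zeta>) (at 0) \<Longrightarrow> m = m' \<Longrightarrow> ord0_ge G m'"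
  using ord0_ge_cong by blast

lemma ord0_ge_zero: "ord0_ge (\<lambda>_. 0) m"
  by (rule ord0_geI[of "\<lambda>_. 0"]) auto

lemma ord0_ge_monom: "ord0_ge (\<lambda>\<zeta>. cmat (\<zeta> powi m) C) m"
  by (rule ord0_geI[of "\<lambda>_. C"]) auto

lemma ord0_ge_add:
  assumes "ord0_ge F m" "ord0_ge G m"
  shows "ord0_ge (\<lambda>\<zeta>. F \<zeta> + G \<zeta>) m"
proof -
  obtain H where H: "mat_analytic0 H" "eventually (\<lambda>\<zeta>. F \<zeta> = cmat (\<zeta> powi m) (H \<zeta>)) (at 0)"
    using assms(1) by (rule ord0_geE)
  obtain K where K: "mat_analytic0 K" "eventually (\<lambda>\<zeta>. G \<zeta> = cmat (\<zeta> powi m) (K \<zeta>)) (at 0)"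
    using assms(2) by (rule ord0_geE)
  show ?thesis
    by (rule ord0_geI[OF mat_analytic0_add[OF H(1) K(1)]])
       (use H(2) K(2) in \<open>eventually_elim, simp add: cmat_add\<close>)
qed

lemma ord0_ge_uminus:
  assumes "ord0_ge F m"
  shows "ord0_ge (\<lambda>\<zeta>. - F \<zeta>) m"
proof -
  obtain H where H: "mat_analytic0 H" "eventually (\<lambda>\<zeta>. F \<zeta> = cmat (\<zeta> powi m) (H \<zeta>)) (at 0)"
    using assms by (rule ord0_geE)
  have "mat_analytic0 (\<lambda>\<zeta>. - H \<zeta>)"
    using H(1) by (auto simp: mat_analytic0_def intro!: analytic_intros)
  then show ?thesis
    by (rule ord0_geI) (use H(2) in \<open>eventually_elim, simp add: cmat_uminus\<close>)
qed

lemma ord0_ge_diff: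
  "ord0_ge F m \<Longrightarrow> ord0_ge G m \<Longrightarrow> ord0_ge (\<lambda>\<zeta>. F \<zeta> - G \<zeta>) m"
  using ord0_ge_add[OF _ ord0_ge_uminus] by simp

lemma ord0_ge_sum:
  "(\<And>x. x \<in> S \<Longrightarrow> ord0_ge (F x) m) \<Longrightarrow> ord0_ge (\<lambda>\<zeta>. \<Sum>x\<in>S. F x \<zeta>) m"
  by (induction S rule: infinite_finite_induct) (auto intro: ord0_ge_add ord0_ge_zero)

lemma ord0_ge_mono:
  assumes "ord0_ge F m" "k \<le> m"
  shows "ord0_ge F k"
proof -
  obtain H where H: "mat_analytic0 H" "eventually (\<lambda>\<zeta>. F \<zeta> = cmat (\<zeta> powi m) (H \<zeta>)) (at 0)"
    using assms(1) by (rule ord0_geE)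
  have pow: "\<zeta> powi m = \<zeta> powi k * \<zeta> ^ nat (m - k)" if "\<zeta> \<noteq> 0" for \<zeta> :: complex
  proof -
    have "\<zeta> powi m = \<zeta> powi k * \<zeta> powi (m - k)"
      using that by (simp add: power_int_add[symmetric])
    then show ?thesis using assms(2) by (simp add: power_int_def)
  qed
  have "eventually (\<lambda>\<zeta>. F \<zeta> = cmat (\<zeta> powi k) (cmat (\<zeta> ^ nat (m - k)) (H \<zeta>))) (at 0)"
    using eventually_at0_nonzero H(2) by eventually_elim (simp add: pow)
  then show ?thesis
    by (rule ord0_geI[rotated]) (intro mat_analytic0_cmat H(1) analytic_intros)
qed

lemma ord0_ge_monom_mono: "k \<le> m \<Longrightarrow> ord0_ge (\<lambda>\<zeta>. cmat (\<zeta> powi m) C) k"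
  by (rule ord0_ge_mono[OF ord0_ge_monom])

lemma ord0_ge_mult:
  assumes "ord0_ge F m" "ord0_ge G k"
  shows "ord0_ge (\<lambda>\<zeta>. F \<zeta> ** G \<zeta>) (m + k)"
proof -
  obtain H where H: "mat_analytic0 H" "eventually (\<lambda>\<zeta>. F \<zeta> = cmat (\<zeta> powi m) (H \<zeta>)) (at 0)"
    using assms(1) by (rule ord0_geE)
  obtain K where K: "mat_analytic0 K" "eventually (\<lambda>\<zeta>. G \<zeta> = cmat (\<zeta> powi k) (K \<zeta>)) (at 0)"
    using assms(2) by (rule ord0_geE)
  show ?thesis
    by (rule ord0_geI[OF mat_analytic0_mult[OF H(1) K(1)]])
       (use H(2) K(2) eventually_at0_nonzero in
         \<open>eventually_elim, simp add: power_int_add mult.commute\<close>)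
qed

lemma ord0_ge_comm:
  assumes "ord0_ge F a" "ord0_ge G b"
  shows "ord0_ge (\<lambda>\<zeta>. comm (F \<zeta>) (G \<zeta>)) (a + b)"
  unfolding comm_def
  by (rule ord0_ge_diff[OF ord0_ge_mult[OF assms]])
     (use ord0_ge_mult[OF assms(2,1)] in \<open>simp add: add.commute\<close>)

lemma analytic_at0_split:
  assumes "(h :: complex \<Rightarrow> complex) analytic_on {0}"
  obtains g where "g analytic_on {0}" "eventually (\<lambda>\<zeta>. h \<zeta> = h 0 + \<zeta> * g \<zeta>) (at 0)"
proof -
  obtain e where e: "e > 0" "h holomorphic_on ball 0 e"
    using assms unfolding analytic_on_def by auto
  define g where "g = (\<lambda>z. if z = 0 then deriv h 0 else (h z - h 0) / (z - 0))"
  have "g holomorphic_on ball 0 e"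
    unfolding g_def by (rule pole_lemma_open[OF e(2)]) simp
  then have "g analytic_on {0}"
    using e(1) by (simp add: analytic_on_open[symmetric] analytic_on_subset)
  moreover have "eventually (\<lambda>\<zeta>. h \<zeta> = h 0 + \<zeta> * g \<zeta>) (at 0)"
    by (simp add: eventually_at_filter g_def)
  ultimately show ?thesis by (rule that)
qed

lemma ord0_ge_leading_coeff:
  assumes "ord0_ge F m"
  obtains C where "ord0_ge (\<lambda>\<zeta>. F \<zeta> - cmat (\<zeta> powi m) C) (m + 1)"
proof -
  obtain H where H: "mat_analytic0 H" "eventually (\<lambda>\<zeta>. F \<zeta> = cmat (\<zeta> powi m) (H \<zeta>)) (at 0)"
    using assms by (rule ord0_geE)
  have "\<forall>i j. \<exists>g. g analytic_on {0} \<and>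
      eventually (\<lambda>\<zeta>. H \<zeta> $ i $ j = H 0 $ i $ j + \<zeta> * g \<zeta>) (at (0::complex))"
    using H(1) analytic_at0_split unfolding mat_analytic0_def by blast
  then obtain g where g: "\<forall>i j. g i j analytic_on {0} \<and>
      eventually (\<lambda>\<zeta>. H \<zeta> $ i $ j = H 0 $ i $ j + \<zeta> * g i j \<zeta>) (at (0::complex))"
    by (auto simp: choice_iff)
  define G where "G = (\<lambda>\<zeta>. \<chi> i j. g i j \<zeta>)"
  have "eventually (\<lambda>\<zeta>. \<forall>i j. H \<zeta> $ i $ j = H 0 $ i $ j + \<zeta> * g i j \<zeta>) (at 0)"
    by (intro eventually_all_finite) (use g in auto)
  then have "eventually (\<lambda>\<zeta>. F \<zeta> - cmat (\<zeta> powi m) (H 0) = cmat (\<zeta> powi (m + 1)) (G \<zeta>)) (at 0)"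
    using H(2) eventually_at0_nonzero
  proof eventually_elim
    case (elim \<zeta>)
    have "\<zeta> powi (m + 1) = \<zeta> powi m * \<zeta>" using elim by (simp add: power_int_add)
    then show ?case using elim by (simp add: vec_eq_iff G_def algebra_simps)
  qed
  moreover have "mat_analytic0 G"
    using g by (simp add: mat_analytic0_def G_def)
  ultimately show ?thesis
    by (intro that[of "H 0"] ord0_geI)
qed

lemma ord0_ge_monom_imp_zero:
  assumes "ord0_ge (\<lambda>\<zeta>. cmat (\<zeta> powi m) C) (m + 1)"
  shows "C = 0"
proof -
  obtain H where H: "mat_analytic0 H"
    "eventually (\<lambda>\<zeta>. cmat (\<zeta> powi m) C = cmat (\<zeta> powi (m + 1)) (H \<zeta>)) (at 0)"
    using assms by (rule ord0_geE)
  have ev: "eventually (\<lambda>\<zeta>. C $ i $ j = \<zeta> * H \<zeta> $ i $ j) (at 0)" for i j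
    using H(2) eventually_at0_nonzero
  proof eventually_elim
    case (elim \<zeta>)
    then have "\<zeta> powi m * C $ i $ j = \<zeta> powi m * (\<zeta> * H \<zeta> $ i $ j)"
      by (simp add: vec_eq_iff power_int_add mult_ac)
    then show ?case using elim(2) by simp
  qed
  have "isCont (\<lambda>\<zeta>. H \<zeta> $ i $ j) 0" for i j
    using H(1) by (simp add: mat_analytic0_def analytic_at_imp_isCont)
  then have "((\<lambda>\<zeta>. \<zeta> * H \<zeta> $ i $ j) \<longlongrightarrow> 0 * H 0 $ i $ j) (at 0)" for i j
    by (intro tendsto_mult tendsto_ident_at) (simp only: isCont_def)
  then have "((\<lambda>\<zeta>. C $ i $ j) \<longlongrightarrow> 0) (at (0::complex))" for i j
    using tendsto_cong[OF ev] by simp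
  then show ?thesis
    by (simp add: vec_eq_iff tendsto_const_iff)
qed

section \<open>Truncated Laurent expansions\<close>

definition laurent_poly :: "int \<Rightarrow> nat \<Rightarrow> (nat \<Rightarrow> 'n::finite mat) \<Rightarrow> complex \<Rightarrow> 'n mat" where
  "laurent_poly a n C \<zeta> = (\<Sum>j<n. cmat (\<zeta> powi (a + int j)) (C j))"

definition laurent_prefix ::
    "(complex \<Rightarrow> 'n::finite mat) \<Rightarrow> int \<Rightarrow> nat \<Rightarrow> (nat \<Rightarrow> 'n mat) \<Rightarrow> bool" where
  "laurent_prefix F a n C \<longleftrightarrow> ord0_ge (\<lambda>\<zeta>. F \<zeta> - laurent_poly a n C \<zeta>) (a + int n)"

definition cauchy_prod :: "(nat \<Rightarrow> 'n::finite mat) \<Rightarrow> (nat \<Rightarrow> 'n mat) \<Rightarrow> nat \<Rightarrow> 'n mat" where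
  "cauchy_prod C D l = (\<Sum>i\<le>l. C i ** D (l - i))"

lemma laurent_poly_0 [simp]: "laurent_poly a 0 C \<zeta> = 0"
  by (simp add: laurent_poly_def)

lemma laurent_poly_Suc:
  "laurent_poly a (Suc n) C \<zeta> = laurent_poly a n C \<zeta> + cmat (\<zeta> powi (a + int n)) (C n)"
  by (simp add: laurent_poly_def)

lemma laurent_poly_cong: "(\<And>j. j < n \<Longrightarrow> C j = D j) \<Longrightarrow> laurent_poly a n C = laurent_poly a n D"
  unfolding laurent_poly_def by (intro ext sum.cong) auto

lemma laurent_poly_diff:
  "laurent_poly a n C \<zeta> - laurent_poly a n D \<zeta> = laurent_poly a n (\<lambda>j. C j - D j) \<zeta>"
  by (simp add: laurent_poly_def cmat_diff sum_subtractf)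

lemma ord0_ge_laurent_poly: "ord0_ge (laurent_poly a n C) a"
  unfolding laurent_poly_def by (intro ord0_ge_sum ord0_ge_monom_mono) auto

lemma laurent_poly_mult:
  assumes "\<zeta> \<noteq> 0"
  shows "laurent_poly a n C \<zeta> ** laurent_poly b n D \<zeta> =
    laurent_poly (a + b) n (cauchy_prod C D) \<zeta> +
    (\<Sum>(i, j)\<in>({..<n} \<times> {..<n}) - {(i, j). i + j < n}.
       cmat (\<zeta> powi (a + b + int (i + j))) (C i ** D j))"
proof -
  let ?f = "\<lambda>(i, j). cmat (\<zeta> powi (a + b + int (i + j))) (C i ** D j)"
  have pw: "\<zeta> powi (a + int i) * \<zeta> powi (b + int j) = \<zeta> powi (a + b + int (i + j))"
    and pw': "\<zeta> powi (b + int j) * \<zeta> powi (a + int i) = \<zeta> powi (a + b + (int i + int j))" for i j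
    using assms by (simp_all add: power_int_add[symmetric] algebra_simps)
  have "laurent_poly a n C \<zeta> ** laurent_poly b n D \<zeta>
      = (\<Sum>i<n. cmat (\<zeta> powi (a + int i)) (C i) ** laurent_poly b n D \<zeta>)"
    by (simp only: laurent_poly_def[of a] matrix_sum_left)
  also have "\<dots> = (\<Sum>i<n. \<Sum>j<n. cmat (\<zeta> powi (a + int i)) (C i) ** cmat (\<zeta> powi (b + int j)) (D j))"
    by (simp only: laurent_poly_def[of b] matrix_sum_right)
  also have "\<dots> = (\<Sum>(i, j)\<in>{..<n} \<times> {..<n}. ?f (i, j))"
    by (simp add: sum.cartesian_product pw pw')
  also have "\<dots> = sum ?f {(i, j). i + j < n} + sum ?f ({..<n} \<times> {..<n} - {(i, j). i + j < n})"
  proof -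
    have "{(i, j). i + j < n} \<subseteq> {..<n} \<times> {..<n}" by auto
    then show ?thesis by (subst sum.subset_diff) auto
  qed
  also have "sum ?f {(i, j). i + j < n} = laurent_poly (a + b) n (cauchy_prod C D) \<zeta>"
    by (subst sum.triangle_reindex) (simp add: laurent_poly_def cauchy_prod_def cmat_sum)
  finally show ?thesis .
qed

lemma laurent_prefix_Suc_iff:
  "laurent_prefix F a (Suc n) C \<longleftrightarrow>
     ord0_ge (\<lambda>\<zeta>. (F \<zeta> - laurent_poly a n C \<zeta>) - cmat (\<zeta> powi (a + int n)) (C n)) (a + int n + 1)"
  by (simp add: laurent_prefix_def laurent_poly_Suc algebra_simps)

lemma laurent_prefix_snoc:
  assumes "laurent_prefix F a (length xs) (nth xs)"
  obtains c where "laurent_prefix F a (Suc (length xs)) (nth (xs @ [c]))"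
proof -
  obtain c where "ord0_ge (\<lambda>\<zeta>. (F \<zeta> - laurent_poly a (length xs) (nth xs) \<zeta>)
      - cmat (\<zeta> powi (a + int (length xs))) c) (a + int (length xs) + 1)"
    using assms unfolding laurent_prefix_def by (rule ord0_ge_leading_coeff)
  moreover have "laurent_poly a (length xs) (nth (xs @ [c])) = laurent_poly a (length xs) (nth xs)"
    by (rule laurent_poly_cong) (simp add: nth_append)
  ultimately show ?thesis
    by (intro that[of c]) (simp add: laurent_prefix_Suc_iff)
qed

lemma laurent_prefix_truncate:
  assumes "laurent_prefix F a (Suc n) C"
  shows "laurent_prefix F a n C"
proof -
  have "ord0_ge (\<lambda>\<zeta>. F \<zeta> - laurent_poly a (Suc n) C \<zeta>) (a + int n)"
    using assms unfolding laurent_prefix_def by (rule ord0_ge_mono) simp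
  then have "ord0_ge (\<lambda>\<zeta>. (F \<zeta> - laurent_poly a (Suc n) C \<zeta>) + cmat (\<zeta> powi (a + int n)) (C n))
      (a + int n)"
    by (rule ord0_ge_add[OF _ ord0_ge_monom])
  then show ?thesis unfolding laurent_prefix_def
    by (rule ord0_ge_cong) (simp add: laurent_poly_Suc)
qed

lemma laurent_prefix_mono: "laurent_prefix F a (n + k) C \<Longrightarrow> laurent_prefix F a n C"
  by (induction k) (auto dest: laurent_prefix_truncate)

lemma laurent_prefix_diff:
  assumes "laurent_prefix F a n C" "laurent_prefix G a n D"
  shows "laurent_prefix (\<lambda>\<zeta>. F \<zeta> - G \<zeta>) a n (\<lambda>j. C j - D j)"
proof -
  have "ord0_ge (\<lambda>\<zeta>. (F \<zeta> - laurent_poly a n C \<zeta>) - (G \<zeta> - laurent_poly a n D \<zeta>)) (a + int n)"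
    using assms unfolding laurent_prefix_def by (rule ord0_ge_diff)
  then show ?thesis unfolding laurent_prefix_def
    by (rule ord0_ge_cong) (simp add: laurent_poly_diff[symmetric] algebra_simps)
qed

lemma laurent_prefix_mult:
  assumes F: "laurent_prefix F a n C" and G: "laurent_prefix G b n D"
  shows "laurent_prefix (\<lambda>\<zeta>. F \<zeta> ** G \<zeta>) (a + b) n (cauchy_prod C D)"
proof -
  let ?P = "laurent_poly a n C" and ?Q = "laurent_poly b n D"
  let ?S = "\<lambda>\<zeta>. \<Sum>(i, j)\<in>({..<n} \<times> {..<n}) - {(i, j). i + j < n}.
              cmat (\<zeta> powi (a + b + int (i + j))) (C i ** D j)"
  have R: "ord0_ge (\<lambda>\<zeta>. F \<zeta> - ?P \<zeta>) (a + int n)" and R': "ord0_ge (\<lambda>\<zeta>. G \<zeta> - ?Q \<zeta>) (b + int n)"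
    using F G by (simp_all add: laurent_prefix_def)
  have "ord0_ge ?S (a + b + int n)"
    by (intro ord0_ge_sum) (auto intro!: ord0_ge_monom_mono)
  moreover have "ord0_ge (\<lambda>\<zeta>. ?P \<zeta> ** (G \<zeta> - ?Q \<zeta>)) (a + b + int n)"
    using ord0_ge_mult[OF ord0_ge_laurent_poly R'] by (simp add: add.assoc)
  moreover have "ord0_ge (\<lambda>\<zeta>. (F \<zeta> - ?P \<zeta>) ** ?Q \<zeta>) (a + b + int n)"
    using ord0_ge_mult[OF R ord0_ge_laurent_poly[of b n D]] by (simp add: algebra_simps)
  moreover have "ord0_ge (\<lambda>\<zeta>. (F \<zeta> - ?P \<zeta>) ** (G \<zeta> - ?Q \<zeta>)) (a + b + int n)"
    by (rule ord0_ge_mono[OF ord0_ge_mult[OF R R']]) simp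
  ultimately have "ord0_ge (\<lambda>\<zeta>. ?S \<zeta> + ?P \<zeta> ** (G \<zeta> - ?Q \<zeta>) + (F \<zeta> - ?P \<zeta>) ** ?Q \<zeta>
      + (F \<zeta> - ?P \<zeta>) ** (G \<zeta> - ?Q \<zeta>)) (a + b + int n)"
    by (intro ord0_ge_add)
  then show ?thesis unfolding laurent_prefix_def
    by (rule ord0_ge_cong)
       (use eventually_at0_nonzero in \<open>eventually_elim, simp add: laurent_poly_mult
          matrix_diff_ldistrib matrix_diff_rdistrib algebra_simps\<close>)
qed

lemma laurent_prefix_comm:
  assumes F: "laurent_prefix F a n C" and G: "laurent_prefix G b n D"
  shows "laurent_prefix (\<lambda>\<zeta>. comm (F \<zeta>) (G \<zeta>)) (a + b) n
           (\<lambda>l. \<Sum>i\<le>l. comm (C i) (D (l - i)))"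
proof -
  have "cauchy_prod D C l = (\<Sum>i\<le>l. D (l - i) ** C i)" for l
    unfolding cauchy_prod_def
    by (rule sum.reindex_bij_witness[where i="\<lambda>i. l - i" and j="\<lambda>i. l - i"]) auto
  then have "(\<Sum>i\<le>l. comm (C i) (D (l - i))) = cauchy_prod C D l - cauchy_prod D C l" for l
    by (simp add: comm_def cauchy_prod_def sum_subtractf)
  moreover have "laurent_prefix (\<lambda>\<zeta>. G \<zeta> ** F \<zeta>) (a + b) n (cauchy_prod D C)"
    using laurent_prefix_mult[OF G F] by (simp add: add.commute)
  ultimately show ?thesis
    using laurent_prefix_diff[OF laurent_prefix_mult[OF F G]] by (simp add: comm_def)
qed

text \<open>\<open>form_defect S X = 0\<close> says that \<open>X\<close> preserves the bilinear form \<open>S\<close>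
  infinitesimally: \<open>S = mat 1\<close> gives \<open>so(n)\<close> and \<open>S = \<sigma>\<close> gives \<open>sp(2n)\<close>.\<close>

definition form_defect :: "'n::finite mat \<Rightarrow> 'n mat \<Rightarrow> 'n mat" where
  "form_defect S X = transpose X ** S + S ** X"

lemma form_defect_diff: "form_defect S (A - B) = form_defect S A - form_defect S B"
  by (simp add: form_defect_def transpose_diff matrix_diff_ldistrib matrix_diff_rdistrib)

lemma form_defect_cmat: "form_defect S (cmat c A) = cmat c (form_defect S A)"
  by (simp add: form_defect_def transpose_cmat cmat_add)

lemma form_defect_add: "form_defect S (A + B) = form_defect S A + form_defect S B"
  using form_defect_diff[of S "A + B" B] by (simp add: algebra_simps)

lemma form_defect_sum: "form_defect S (sum f I) = (\<Sum>i\<in>I. form_defect S (f i))"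
proof (induction I rule: infinite_finite_induct)
  case empty
  show ?case using form_defect_diff[of S 0 0] by simp
qed (simp_all add: form_defect_add, use form_defect_diff[of S 0 0] in simp)

lemma ord0_ge_form_defect:
  assumes "ord0_ge F m"
  shows "ord0_ge (\<lambda>\<zeta>. form_defect S (F \<zeta>)) m"
proof -
  obtain H where H: "mat_analytic0 H" "eventually (\<lambda>\<zeta>. F \<zeta> = cmat (\<zeta> powi m) (H \<zeta>)) (at 0)"
    using assms by (rule ord0_geE)
  have "mat_analytic0 (\<lambda>\<zeta>. form_defect S (H \<zeta>))"
    unfolding form_defect_def
    by (intro mat_analytic0_add mat_analytic0_mult mat_analytic0_transpose H(1)) simp_all
  then show ?thesis
    by (rule ord0_geI) (use H(2) in \<open>eventually_elim, simp add: form_defect_cmat\<close>)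
qed

lemma laurent_prefix_form_defect:
  assumes F: "laurent_prefix F a n C"
    and ev: "eventually (\<lambda>\<zeta>. form_defect S (F \<zeta>) = 0) (at 0)"
  shows "j < n \<Longrightarrow> form_defect S (C j) = 0"
proof (induction j rule: less_induct)
  case (less j)
  have poly: "form_defect S (laurent_poly a j C \<zeta>) = 0" for \<zeta>
    using less.IH less.prems
    by (simp add: laurent_poly_def form_defect_sum form_defect_cmat)
  have "laurent_prefix F a (Suc j) C"
    using laurent_prefix_mono[of F a "Suc j" "n - Suc j" C] F less.prems by simp
  then have "ord0_ge (\<lambda>\<zeta>. form_defect S ((F \<zeta> - laurent_poly a j C \<zeta>)
      - cmat (\<zeta> powi (a + int j)) (C j))) (a + int j + 1)"
    unfolding laurent_prefix_Suc_iff by (rule ord0_ge_form_defect)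
  then have "ord0_ge (\<lambda>\<zeta>. cmat (\<zeta> powi (a + int j)) (form_defect S (C j))) (a + int j + 1)"
    by (rule ord0_ge_cong[OF ord0_ge_uminus])
       (use ev in \<open>eventually_elim, simp add: form_defect_diff form_defect_cmat poly\<close>)
  then show ?case by (rule ord0_ge_monom_imp_zero)
qed

section \<open>Coefficient identities behind the Tyurin conditions\<close>

lemma gl_tyurin_coeffs:
  fixes \<alpha> \<beta> \<beta>' :: "complex^'n::finite"
  assumes b: "bil \<beta> \<alpha> = 0" and b': "bil \<beta>' \<alpha> = 0"
    and B: "B *v \<alpha> = \<kappa> *s \<alpha>" and B': "B' *v \<alpha> = \<kappa>' *s \<alpha>"
  defines "\<gamma> \<equiv> transpose B' *v \<beta> + \<kappa> *s \<beta>' - transpose B *v \<beta>' - \<kappa>' *s \<beta>"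
  shows "comm (outer \<alpha> \<beta>) (outer \<alpha> \<beta>') = 0"
    and "comm (outer \<alpha> \<beta>) B' + comm B (outer \<alpha> \<beta>') = outer \<alpha> \<gamma>"
    and "bil \<gamma> \<alpha> = 0"
    and "(comm (outer \<alpha> \<beta>) Y2 + comm B B' + comm X2 (outer \<alpha> \<beta>')) *v \<alpha>
          = (bil \<beta> (Y2 *v \<alpha>) + \<kappa> * \<kappa>' - bil \<beta>' (X2 *v \<alpha>) - \<kappa>' * \<kappa>) *s \<alpha>"
proof -
  show "comm (outer \<alpha> \<beta>) (outer \<alpha> \<beta>') = 0"
    using b b' by (simp add: comm_def outer_mult_outer)
  show "comm (outer \<alpha> \<beta>) B' + comm B (outer \<alpha> \<beta>') = outer \<alpha> \<gamma>"
    by (simp add: comm_def outer_matrix_mult matrix_mult_outer B B' outer_smult1 outer_smult2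
        \<gamma>_def outer_add2 outer_diff2)
  show "bil \<gamma> \<alpha> = 0"
    by (simp add: \<gamma>_def bil_add1 bil_diff1 bil_smult1 bil_vector_matrix_mult B B' bil_smult2 b b')
  show "(comm (outer \<alpha> \<beta>) Y2 + comm B B' + comm X2 (outer \<alpha> \<beta>')) *v \<alpha>
          = (bil \<beta> (Y2 *v \<alpha>) + \<kappa> * \<kappa>' - bil \<beta>' (X2 *v \<alpha>) - \<kappa>' * \<kappa>) *s \<alpha>"
    by (simp add: comm_def matrix_vector_mult_add_rdistrib matrix_vector_mult_diff_rdistrib
        matrix_vector_mul_assoc[symmetric] outer_matrix_vector_mult b b' B B'
        matrix_vector_mult_smult vector_sadd_rdistrib vector_sub_rdistrib algebra_simps)
qed

lemma so_tyurin_coeffs: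
  fixes \<alpha> \<beta> \<beta>' :: "complex^'n::finite"
  assumes aa: "bil \<alpha> \<alpha> = 0" and b: "bil \<beta> \<alpha> = 0" and b': "bil \<beta>' \<alpha> = 0"
    and B: "B *v \<alpha> = \<kappa> *s \<alpha>" and B': "B' *v \<alpha> = \<kappa>' *s \<alpha>"
    and Bt: "transpose B = - B" and Bt': "transpose B' = - B'"
    and X2: "transpose X2 = - X2" and Y2: "transpose Y2 = - Y2"
  defines "\<gamma> \<equiv> B *v \<beta>' + \<kappa> *s \<beta>' - B' *v \<beta> - \<kappa>' *s \<beta>"
  shows "comm (outer \<alpha> \<beta> - outer \<beta> \<alpha>) (outer \<alpha> \<beta>' - outer \<beta>' \<alpha>) = 0"
    and "comm (outer \<alpha> \<beta> - outer \<beta> \<alpha>) B' + comm B (outer \<alpha> \<beta>' - outer \<beta>' \<alpha>) = outer \<alpha> \<gamma> - outer \<gamma> \<alpha>"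
    and "bil \<gamma> \<alpha> = 0"
    and "(comm (outer \<alpha> \<beta> - outer \<beta> \<alpha>) Y2 + comm B B' + comm X2 (outer \<alpha> \<beta>' - outer \<beta>' \<alpha>)) *v \<alpha>
          = (bil \<beta> (Y2 *v \<alpha>) + \<kappa> * \<kappa>' - bil \<beta>' (X2 *v \<alpha>) - \<kappa>' * \<kappa>) *s \<alpha>"
proof -
  have ab: "bil \<alpha> \<beta> = 0" "bil \<alpha> \<beta>' = 0" using b b' by (simp_all add: bil_commute)
  show "comm (outer \<alpha> \<beta> - outer \<beta> \<alpha>) (outer \<alpha> \<beta>' - outer \<beta>' \<alpha>) = 0"
    using b b' aa ab by (simp add: comm_def outer_mult_outer matrix_diff_ldistrib
        matrix_diff_rdistrib bil_commute)
  show "comm (outer \<alpha> \<beta> - outer \<beta> \<alpha>) B' + comm B (outer \<alpha> \<beta>' - outer \<beta>' \<alpha>) = outer \<alpha> \<gamma> - outer \<gamma> \<alpha>"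
    by (simp add: comm_def outer_matrix_mult matrix_mult_outer B B' Bt Bt' outer_smult1
        outer_smult2 \<gamma>_def outer_add2 outer_diff2 outer_add1 outer_diff1 outer_uminus1
        outer_uminus2 matrix_vector_mult_uminus_left matrix_diff_ldistrib matrix_diff_rdistrib
        algebra_simps)
  show "bil \<gamma> \<alpha> = 0"
    by (simp add: \<gamma>_def bil_add1 bil_diff1 bil_smult1 bil_matrix_vector_mult' Bt Bt'
        matrix_vector_mult_uminus_left bil_uminus2 B B' bil_smult2 b b')
  have y: "bil \<alpha> (Y2 *v \<alpha>) = 0" "bil \<alpha> (X2 *v \<alpha>) = 0" using bil_skew_self X2 Y2 by blast+
  show "(comm (outer \<alpha> \<beta> - outer \<beta> \<alpha>) Y2 + comm B B' + comm X2 (outer \<alpha> \<beta>' - outer \<beta>' \<alpha>)) *v \<alpha>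
          = (bil \<beta> (Y2 *v \<alpha>) + \<kappa> * \<kappa>' - bil \<beta>' (X2 *v \<alpha>) - \<kappa>' * \<kappa>) *s \<alpha>"
    by (simp add: comm_def matrix_vector_mult_add_rdistrib matrix_vector_mult_diff_rdistrib
        matrix_vector_mul_assoc[symmetric] outer_matrix_vector_mult b b' aa ab y B B'
        matrix_vector_mult_smult matrix_vector_mult_diff_distrib vector_sadd_rdistrib
        vector_sub_rdistrib algebra_simps)
qed

definition sym_outer :: "'n::finite mat \<Rightarrow> complex^'n \<Rightarrow> complex^'n \<Rightarrow> 'n mat" where
  "sym_outer \<sigma> a v = (outer a v + outer v a) ** \<sigma>"

lemma sym_outer_add: "sym_outer \<sigma> a (u + v) = sym_outer \<sigma> a u + sym_outer \<sigma> a v"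
  by (simp add: sym_outer_def outer_add1 outer_add2 matrix_add_rdistrib algebra_simps)
lemma sym_outer_diff: "sym_outer \<sigma> a (u - v) = sym_outer \<sigma> a u - sym_outer \<sigma> a v"
  by (simp add: sym_outer_def outer_diff1 outer_diff2 matrix_diff_rdistrib algebra_simps)
lemma sym_outer_uminus: "sym_outer \<sigma> a (- u) = - sym_outer \<sigma> a u"
  by (simp add: sym_outer_def outer_uminus1 outer_uminus2 matrix_uminus_left matrix_diff_rdistrib
      matrix_add_rdistrib)
lemma sym_outer_smult: "sym_outer \<sigma> a (c *s u) = cmat c (sym_outer \<sigma> a u)"
  by (simp add: sym_outer_def outer_smult1 outer_smult2 cmat_add matrix_add_rdistrib)

context
  fixes \<sigma> :: "'n::finite mat" and \<alpha> :: "complex^'n"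
  assumes st: "transpose \<sigma> = - \<sigma>"
begin

abbreviation symp where "symp x y \<equiv> bil x (\<sigma> *v y)"

lemma symp_anticomm: "symp x y = - symp y x"
proof -
  have "symp x y = bil (transpose \<sigma> *v x) y" by (rule bil_matrix_vector_mult)
  also have "\<dots> = - symp y x"
    using st by (simp add: matrix_vector_mult_uminus_left bil_uminus1 bil_uminus2 bil_commute)
  finally show ?thesis .
qed

lemma symp_self: "symp x x = 0"
  using symp_anticomm[of x x] by simp

lemma form_defect_zeroD: "form_defect \<sigma> X = 0 \<Longrightarrow> transpose X ** \<sigma> = - (\<sigma> ** X)"
  by (simp add: form_defect_def eq_neg_iff_add_eq_0)

lemma symp_form_defect:
  assumes "form_defect \<sigma> X = 0"
  shows "symp x (X *v y) = - symp (X *v x) y"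
proof -
  have "symp x (X *v y) = bil x ((\<sigma> ** X) *v y)"
    by (simp add: matrix_vector_mul_assoc[symmetric])
  also have "\<dots> = bil (transpose (\<sigma> ** X) *v x) y" by (rule bil_matrix_vector_mult)
  also have "transpose (\<sigma> ** X) = transpose X ** transpose \<sigma>" by (rule matrix_transpose_mul)
  also have "\<dots> = - (transpose X ** \<sigma>)" using st by (simp add: matrix_uminus_right)
  also have "\<dots> = \<sigma> ** X" using form_defect_zeroD[OF assms] by simp
  also have "bil ((\<sigma> ** X) *v x) y = symp y (X *v x)"
    by (simp add: matrix_vector_mul_assoc[symmetric] bil_commute)
  also have "\<dots> = - symp (X *v x) y" by (rule symp_anticomm)
  finally show ?thesis .
qed

lemma outer_mult_sigma: "outer u v ** \<sigma> = - outer u (\<sigma> *v v)"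
  using st by (simp add: outer_matrix_mult matrix_vector_mult_uminus_left outer_uminus2)

lemma outer_sigma_mult_sp:
  assumes "form_defect \<sigma> X = 0"
  shows "outer u (\<sigma> *v v) ** X = - outer u (\<sigma> *v (X *v v))"
proof -
  have "transpose X *v (\<sigma> *v v) = (transpose X ** \<sigma>) *v v"
    by (simp add: matrix_vector_mul_assoc[symmetric])
  also have "\<dots> = - (\<sigma> *v (X *v v))"
    using form_defect_zeroD[OF assms]
    by (simp add: matrix_vector_mult_uminus_left matrix_vector_mul_assoc[symmetric])
  finally have "transpose X *v (\<sigma> *v v) = - (\<sigma> *v (X *v v))" .
  then show ?thesis by (simp only: outer_matrix_mult outer_uminus2)
qed

lemma outer_sigma_mult_outer: "outer u (\<sigma> *v v) ** outer u' w = cmat (symp u' v) (outer u w)"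
  by (simp add: outer_mult_outer bil_commute)

lemma outer_self_mult_sigma: "outer \<alpha> \<alpha> ** \<sigma> = - outer \<alpha> (\<sigma> *v \<alpha>)"
  by (rule outer_mult_sigma)
lemma sym_outer_eq: "sym_outer \<sigma> \<alpha> v = - (outer \<alpha> (\<sigma> *v v) + outer v (\<sigma> *v \<alpha>))"
  by (simp add: sym_outer_def matrix_add_rdistrib outer_mult_sigma)

lemma comm_outer_self_sym_outer:
  assumes "symp \<beta> \<alpha> = 0"
  shows "comm (outer \<alpha> \<alpha> ** \<sigma>) (sym_outer \<sigma> \<alpha> \<beta>) = 0"
proof -
  have "symp \<alpha> \<beta> = 0" using assms symp_anticomm[of \<alpha> \<beta>] by simp
  then show ?thesis using assms
    by (simp add: comm_def outer_self_mult_sigma sym_outer_eq matrix_add_ldistrib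
        matrix_add_rdistrib matrix_diff_ldistrib matrix_diff_rdistrib matrix_uminus_left
        matrix_uminus_right outer_sigma_mult_outer symp_self)
qed

lemma comm_outer_self_sp:
  assumes "form_defect \<sigma> X = 0"
  shows "comm (outer \<alpha> \<alpha> ** \<sigma>) X = - sym_outer \<sigma> \<alpha> (X *v \<alpha>)"
proof -
  have 1: "(outer \<alpha> \<alpha> ** \<sigma>) ** X = outer \<alpha> (\<sigma> *v (X *v \<alpha>))"
    by (simp only: outer_self_mult_sigma matrix_uminus_left outer_sigma_mult_sp[OF assms]
        minus_minus)
  have 2: "X ** (outer \<alpha> \<alpha> ** \<sigma>) = - outer (X *v \<alpha>) (\<sigma> *v \<alpha>)"
    by (simp only: outer_self_mult_sigma matrix_uminus_right matrix_mult_outer)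
  show ?thesis by (simp only: comm_def 1 2 sym_outer_eq minus_minus diff_minus_eq_add)
qed

lemma comm_sym_outer_sp:
  assumes "form_defect \<sigma> X = 0" "X *v \<alpha> = \<kappa> *s \<alpha>"
  shows "comm (sym_outer \<sigma> \<alpha> \<beta>) X = - sym_outer \<sigma> \<alpha> (X *v \<beta> + \<kappa> *s \<beta>)"
  by (simp add: comm_def sym_outer_eq matrix_uminus_left matrix_uminus_right matrix_add_rdistrib
      matrix_add_ldistrib matrix_diff_ldistrib matrix_diff_rdistrib outer_sigma_mult_sp[OF assms(1)]
      matrix_mult_outer assms(2) outer_add1 outer_add2 outer_smult1 outer_smult2
      matrix_vector_mult_smult algebra_simps)

lemma mat_two_times: "2 * (X::'m::finite mat) = cmat 2 X"
  by (simp add: cmat_def vec_eq_iff)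

lemma comm_sym_outer_sym_outer:
  assumes "symp \<beta> \<alpha> = 0" "symp \<beta>' \<alpha> = 0"
  shows "comm (sym_outer \<sigma> \<alpha> \<beta>) (sym_outer \<sigma> \<alpha> \<beta>') = cmat (2 * symp \<beta> \<beta>') (outer \<alpha> \<alpha> ** \<sigma>)"
proof -
  have "symp \<alpha> \<beta> = 0" "symp \<alpha> \<beta>' = 0"
    using assms symp_anticomm[of \<alpha> \<beta>] symp_anticomm[of \<alpha> \<beta>'] by simp_all
  moreover have "symp \<beta>' \<beta> = - symp \<beta> \<beta>'" by (rule symp_anticomm)
  ultimately show ?thesis using assms
    by (simp add: comm_def outer_self_mult_sigma sym_outer_eq matrix_add_ldistrib
        matrix_add_rdistrib matrix_diff_ldistrib matrix_diff_rdistrib matrix_uminus_left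
        matrix_uminus_right outer_sigma_mult_outer symp_self cmat_uminus cmat_uminus_left
        mat_two_times flip: cmat_add_left)
qed

lemma sym_outer_self: "sym_outer \<sigma> \<alpha> \<alpha> = cmat 2 (outer \<alpha> \<alpha> ** \<sigma>)"
  by (simp only: sym_outer_def cmat_two matrix_add_rdistrib)

lemma outer_self_sigma_mult_vec: "(outer \<alpha> \<alpha> ** \<sigma>) *v v = symp \<alpha> v *s \<alpha>"
  by (simp add: matrix_vector_mul_assoc[symmetric] outer_matrix_vector_mult)
lemma sym_outer_mult_vec: "sym_outer \<sigma> \<alpha> \<beta> *v v = symp \<beta> v *s \<alpha> + symp \<alpha> v *s \<beta>"
  by (simp add: sym_outer_def matrix_vector_mul_assoc[symmetric] outer_matrix_vector_mult
      matrix_vector_mult_add_rdistrib)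

lemma sp_comm_order_minus3:
  assumes "symp \<beta> \<alpha> = 0" "symp \<beta>' \<alpha> = 0"
  shows "comm (cmat \<nu> (outer \<alpha> \<alpha> ** \<sigma>)) (sym_outer \<sigma> \<alpha> \<beta>')
          + comm (sym_outer \<sigma> \<alpha> \<beta>) (cmat \<nu>' (outer \<alpha> \<alpha> ** \<sigma>)) = 0"
proof -
  have "comm (sym_outer \<sigma> \<alpha> \<beta>) (outer \<alpha> \<alpha> ** \<sigma>) = 0"
    using comm_outer_self_sym_outer[OF assms(1)] comm_anticomm[of "sym_outer \<sigma> \<alpha> \<beta>"] by simp
  then show ?thesis
    using comm_outer_self_sym_outer[OF assms(2)] by (simp add: comm_cmat_left comm_cmat_right)
qed

lemma sp_comm_order_minus2:
  assumes "symp \<beta> \<alpha> = 0" "symp \<beta>' \<alpha> = 0" "form_defect \<sigma> B = 0" "form_defect \<sigma> B' = 0"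
    "B *v \<alpha> = \<kappa> *s \<alpha>" "B' *v \<alpha> = \<kappa>' *s \<alpha>"
  shows "comm (cmat \<nu> (outer \<alpha> \<alpha> ** \<sigma>)) B' + comm (sym_outer \<sigma> \<alpha> \<beta>) (sym_outer \<sigma> \<alpha> \<beta>')
          + comm B (cmat \<nu>' (outer \<alpha> \<alpha> ** \<sigma>))
     = cmat (2 * (\<nu>' * \<kappa> - \<nu> * \<kappa>' + symp \<beta> \<beta>')) (outer \<alpha> \<alpha> ** \<sigma>)"
proof -
  have 1: "comm (outer \<alpha> \<alpha> ** \<sigma>) B' = cmat (- 2 * \<kappa>') (outer \<alpha> \<alpha> ** \<sigma>)"
    using comm_outer_self_sp[OF assms(4)] assms(6)
    by (simp add: sym_outer_smult sym_outer_self cmat_uminus_left mult.commute)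
  have 2: "comm B (outer \<alpha> \<alpha> ** \<sigma>) = cmat (2 * \<kappa>) (outer \<alpha> \<alpha> ** \<sigma>)"
    using comm_outer_self_sp[OF assms(3)] assms(5) comm_anticomm[of B]
    by (simp add: sym_outer_smult sym_outer_self mult.commute)
  show ?thesis
    by (simp add: comm_cmat_left comm_cmat_right 1 2 comm_sym_outer_sym_outer[OF assms(1,2)]
        flip: cmat_add_left cmat_diff_left) (simp add: algebra_simps)
qed

lemma sp_comm_order_minus1:
  fixes \<nu> \<nu>' :: complex
  assumes "symp \<beta> \<alpha> = 0" "symp \<beta>' \<alpha> = 0" "form_defect \<sigma> B = 0" "form_defect \<sigma> B' = 0"
    "form_defect \<sigma> C = 0" "form_defect \<sigma> C' = 0"
    "B *v \<alpha> = \<kappa> *s \<alpha>" "B' *v \<alpha> = \<kappa>' *s \<alpha>"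
    "symp \<alpha> (C *v \<alpha>) = 0" "symp \<alpha> (C' *v \<alpha>) = 0"
  defines "\<gamma> \<equiv> - (\<nu> *s (C' *v \<alpha>)) - (B' *v \<beta> + \<kappa>' *s \<beta>) + (B *v \<beta>' + \<kappa> *s \<beta>') + \<nu>' *s (C *v \<alpha>)"
  shows "comm (cmat \<nu> (outer \<alpha> \<alpha> ** \<sigma>)) C' + comm (sym_outer \<sigma> \<alpha> \<beta>) B' + comm B (sym_outer \<sigma> \<alpha> \<beta>')
          + comm C (cmat \<nu>' (outer \<alpha> \<alpha> ** \<sigma>)) = sym_outer \<sigma> \<alpha> \<gamma>"
    and "symp \<gamma> \<alpha> = 0"
proof -
  have 1: "comm B (sym_outer \<sigma> \<alpha> \<beta>') = sym_outer \<sigma> \<alpha> (B *v \<beta>' + \<kappa> *s \<beta>')"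
    using comm_sym_outer_sp[OF assms(3,7), of \<beta>'] comm_anticomm[of B] by simp
  have 2: "comm C (outer \<alpha> \<alpha> ** \<sigma>) = sym_outer \<sigma> \<alpha> (C *v \<alpha>)"
    using comm_outer_self_sp[OF assms(5)] comm_anticomm[of C] by simp
  show "comm (cmat \<nu> (outer \<alpha> \<alpha> ** \<sigma>)) C' + comm (sym_outer \<sigma> \<alpha> \<beta>) B' + comm B (sym_outer \<sigma> \<alpha> \<beta>')
          + comm C (cmat \<nu>' (outer \<alpha> \<alpha> ** \<sigma>)) = sym_outer \<sigma> \<alpha> \<gamma>"
    by (simp add: comm_cmat_left comm_cmat_right 1 2 comm_outer_self_sp[OF assms(6)]
        comm_sym_outer_sp[OF assms(4,8)] \<gamma>_def sym_outer_add sym_outer_diff sym_outer_uminus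
        sym_outer_smult cmat_uminus)
  have a: "symp (C' *v \<alpha>) \<alpha> = 0" "symp (C *v \<alpha>) \<alpha> = 0"
    using assms(9,10) symp_anticomm[of "C' *v \<alpha>" \<alpha>] symp_anticomm[of "C *v \<alpha>" \<alpha>] by simp_all
  have b: "symp (B' *v \<beta>) \<alpha> = 0" "symp (B *v \<beta>') \<alpha> = 0"
    using symp_form_defect[OF assms(4), of \<beta> \<alpha>] symp_form_defect[OF assms(3), of \<beta>' \<alpha>]
      assms(1,2,7,8)
    by (simp_all add: matrix_vector_mult_smult bil_smult2)
  show "symp \<gamma> \<alpha> = 0"
    by (simp add: \<gamma>_def bil_add1 bil_diff1 bil_uminus1 bil_smult1 a b assms(1,2))
qed

lemma sp_comm_order_0:
  assumes "symp \<beta> \<alpha> = 0" "symp \<beta>' \<alpha> = 0"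
    "B *v \<alpha> = \<kappa> *s \<alpha>" "B' *v \<alpha> = \<kappa>' *s \<alpha>"
    "symp \<alpha> (C *v \<alpha>) = 0" "symp \<alpha> (C' *v \<alpha>) = 0"
  shows "(comm (cmat \<nu> (outer \<alpha> \<alpha> ** \<sigma>)) D' + comm (sym_outer \<sigma> \<alpha> \<beta>) C' + comm B B'
          + comm C (sym_outer \<sigma> \<alpha> \<beta>') + comm D (cmat \<nu>' (outer \<alpha> \<alpha> ** \<sigma>))) *v \<alpha>
     = (\<nu> * symp \<alpha> (D' *v \<alpha>) + symp \<beta> (C' *v \<alpha>) - symp \<beta>' (C *v \<alpha>)
          - \<nu>' * symp \<alpha> (D *v \<alpha>)) *s \<alpha>"
proof -
  have s: "sym_outer \<sigma> \<alpha> \<beta> *v \<alpha> = 0" "sym_outer \<sigma> \<alpha> \<beta>' *v \<alpha> = 0" "(outer \<alpha> \<alpha> ** \<sigma>) *v \<alpha> = 0"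
    using assms(1,2) by (simp_all add: sym_outer_mult_vec outer_self_sigma_mult_vec symp_self)
  show ?thesis
    by (simp add: comm_def matrix_vector_mult_add_rdistrib matrix_vector_mult_diff_rdistrib
        matrix_vector_mul_assoc[symmetric] s cmat_matrix_vector_mult matrix_vector_mult_smult
        sym_outer_mult_vec outer_self_sigma_mult_vec assms outer_matrix_vector_mult symp_self
        vector_sadd_rdistrib vector_sub_rdistrib algebra_simps)
qed

lemma sp_comm_order_1:
  assumes "symp \<beta> \<alpha> = 0" "symp \<beta>' \<alpha> = 0" "form_defect \<sigma> B = 0" "form_defect \<sigma> B' = 0"
    "B *v \<alpha> = \<kappa> *s \<alpha>" "B' *v \<alpha> = \<kappa>' *s \<alpha>"
    "symp \<alpha> (C *v \<alpha>) = 0" "symp \<alpha> (C' *v \<alpha>) = 0"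
  shows "symp \<alpha> ((comm (cmat \<nu> (outer \<alpha> \<alpha> ** \<sigma>)) L' + comm (sym_outer \<sigma> \<alpha> \<beta>) D'
          + comm B C' + comm C B' + comm D (sym_outer \<sigma> \<alpha> \<beta>')
          + comm L (cmat \<nu>' (outer \<alpha> \<alpha> ** \<sigma>))) *v \<alpha>) = 0"
proof -
  have s: "sym_outer \<sigma> \<alpha> \<beta> *v \<alpha> = 0" "sym_outer \<sigma> \<alpha> \<beta>' *v \<alpha> = 0" "(outer \<alpha> \<alpha> ** \<sigma>) *v \<alpha> = 0"
    using assms(1,2) by (simp_all add: sym_outer_mult_vec outer_self_sigma_mult_vec symp_self)
  have ab: "symp \<alpha> \<beta> = 0" "symp \<alpha> \<beta>' = 0"
    using assms(1,2) symp_anticomm[of \<alpha> \<beta>] symp_anticomm[of \<alpha> \<beta>'] by simp_all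
  have c: "symp \<alpha> (B *v (C' *v \<alpha>)) = 0" "symp \<alpha> (B' *v (C *v \<alpha>)) = 0"
    using symp_form_defect[OF assms(3), of \<alpha> "C' *v \<alpha>"] symp_form_defect[OF assms(4), of \<alpha> "C *v \<alpha>"]
      assms(5-8)
    by (simp_all add: bil_smult1)
  have aa: "symp \<alpha> \<alpha> = 0" by (rule symp_self)
  show ?thesis
    by (simp add: comm_def matrix_vector_mult_add_rdistrib matrix_vector_mult_diff_rdistrib
        matrix_vector_mul_assoc[symmetric] s cmat_matrix_vector_mult matrix_vector_mult_smult
        sym_outer_mult_vec outer_self_sigma_mult_vec assms(1,2,5-8) c ab aa
        outer_matrix_vector_mult bil_add2 bil_diff2 bil_smult2 matrix_vector_right_distrib
        matrix_vector_mult_diff_distrib matrix_vector_mult_uminus_right bil_uminus2)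
qed

end
section \<open>Tyurin conditions in a local coordinate\<close>

definition tyurin_local ::
    "lie_kind \<Rightarrow> 'n::finite mat \<Rightarrow> complex^'n \<Rightarrow> (complex \<Rightarrow> 'n mat) \<Rightarrow> bool" where
  "tyurin_local kd \<sigma> \<alpha> F \<longleftrightarrow>
     (case kd of
       SP \<Rightarrow> (\<exists>\<beta> \<nu> \<kappa> L0 L1.
               bil \<beta> (\<sigma> *v \<alpha>) = 0 \<and> L0 *v \<alpha> = \<kappa> *s \<alpha> \<and> bil \<alpha> (\<sigma> *v (L1 *v \<alpha>)) = 0 \<and>
               ord0_ge (\<lambda>\<zeta>. F \<zeta> - cmat (inverse (\<zeta>^2)) (cmat \<nu> (outer \<alpha> \<alpha> ** \<sigma>))
                            - cmat (inverse \<zeta>) ((outer \<alpha> \<beta> + outer \<beta> \<alpha>) ** \<sigma>)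
                            - L0 - cmat \<zeta> L1) 2)
     | SO \<Rightarrow> (\<exists>\<beta> \<kappa> L0. bil \<beta> \<alpha> = 0 \<and> L0 *v \<alpha> = \<kappa> *s \<alpha> \<and>
               ord0_ge (\<lambda>\<zeta>. F \<zeta> - cmat (inverse \<zeta>) (outer \<alpha> \<beta> - outer \<beta> \<alpha>) - L0) 1)
     | _ \<Rightarrow> (\<exists>\<beta> \<kappa> L0. bil \<beta> \<alpha> = 0 \<and> L0 *v \<alpha> = \<kappa> *s \<alpha> \<and>
               ord0_ge (\<lambda>\<zeta>. F \<zeta> - cmat (inverse \<zeta>) (outer \<alpha> \<beta>) - L0) 1))"

lemma tyurin_cond_iff_local: "tyurin_cond kd \<sigma> c \<alpha> L \<longleftrightarrow> tyurin_local kd \<sigma> \<alpha> (in_coord c L)"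
  by (simp add: tyurin_cond_def tyurin_local_def Let_def)

lemma tyurin_local_GL:
  "kd \<noteq> SO \<Longrightarrow> kd \<noteq> SP \<Longrightarrow> tyurin_local kd \<sigma> \<alpha> F \<longleftrightarrow>
     (\<exists>\<beta> \<kappa> L0. bil \<beta> \<alpha> = 0 \<and> L0 *v \<alpha> = \<kappa> *s \<alpha> \<and>
        ord0_ge (\<lambda>\<zeta>. F \<zeta> - cmat (inverse \<zeta>) (outer \<alpha> \<beta>) - L0) 1)"
  by (cases kd) (auto simp: tyurin_local_def)

lemma tyurin_local_SO:
  "tyurin_local SO \<sigma> \<alpha> F \<longleftrightarrow>
     (\<exists>\<beta> \<kappa> L0. bil \<beta> \<alpha> = 0 \<and> L0 *v \<alpha> = \<kappa> *s \<alpha> \<and>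
        ord0_ge (\<lambda>\<zeta>. F \<zeta> - cmat (inverse \<zeta>) (outer \<alpha> \<beta> - outer \<beta> \<alpha>) - L0) 1)"
  by (simp add: tyurin_local_def)

lemma tyurin_local_SP:
  "tyurin_local SP \<sigma> \<alpha> F \<longleftrightarrow>
     (\<exists>\<beta> \<nu> \<kappa> L0 L1.
        bil \<beta> (\<sigma> *v \<alpha>) = 0 \<and> L0 *v \<alpha> = \<kappa> *s \<alpha> \<and> bil \<alpha> (\<sigma> *v (L1 *v \<alpha>)) = 0 \<and>
        ord0_ge (\<lambda>\<zeta>. F \<zeta> - cmat (inverse (\<zeta>^2)) (cmat \<nu> (outer \<alpha> \<alpha> ** \<sigma>))
                     - cmat (inverse \<zeta>) (sym_outer \<sigma> \<alpha> \<beta>) - L0 - cmat \<zeta> L1) 2)"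
  by (simp add: tyurin_local_def sym_outer_def)

lemma in_lie_SO_iff: "in_lie SO \<sigma> X \<longleftrightarrow> form_defect (mat 1) X = 0"
  by (simp add: in_lie_def form_defect_def eq_neg_iff_add_eq_0)

lemma in_lie_SP_iff: "in_lie SP \<sigma> X \<longleftrightarrow> form_defect \<sigma> X = 0"
  by (simp add: in_lie_def form_defect_def)

lemma tyurin_local_diff_GL:
  assumes kd: "kd \<noteq> SO" "kd \<noteq> SP" and F: "tyurin_local kd \<sigma> \<alpha> F" and G: "tyurin_local kd \<sigma> \<alpha> G"
  shows "tyurin_local kd \<sigma> \<alpha> (\<lambda>\<zeta>. F \<zeta> - G \<zeta>)"
proof -
  obtain \<beta> \<kappa> B where b: "bil \<beta> \<alpha> = 0" and B: "B *v \<alpha> = \<kappa> *s \<alpha>"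
    and oF: "ord0_ge (\<lambda>\<zeta>. F \<zeta> - cmat (inverse \<zeta>) (outer \<alpha> \<beta>) - B) 1"
    using F tyurin_local_GL[OF kd] by blast
  obtain \<beta>' \<kappa>' B' where b': "bil \<beta>' \<alpha> = 0" and B': "B' *v \<alpha> = \<kappa>' *s \<alpha>"
    and oG: "ord0_ge (\<lambda>\<zeta>. G \<zeta> - cmat (inverse \<zeta>) (outer \<alpha> \<beta>') - B') 1"
    using G tyurin_local_GL[OF kd] by blast
  have "ord0_ge (\<lambda>\<zeta>. (F \<zeta> - G \<zeta>) - cmat (inverse \<zeta>) (outer \<alpha> (\<beta> - \<beta>')) - (B - B')) 1"
    by (rule ord0_ge_cong[OF ord0_ge_diff[OF oF oG]])
       (simp add: outer_diff2 cmat_diff algebra_simps)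
  moreover have "bil (\<beta> - \<beta>') \<alpha> = 0" "(B - B') *v \<alpha> = (\<kappa> - \<kappa>') *s \<alpha>"
    using b b' B B' by (simp_all add: bil_diff1 matrix_vector_mult_diff_rdistrib
        vector_sub_rdistrib)
  ultimately show ?thesis
    using tyurin_local_GL[OF kd] by blast
qed

lemma tyurin_local_diff_SO:
  assumes F: "tyurin_local SO \<sigma> \<alpha> F" and G: "tyurin_local SO \<sigma> \<alpha> G"
  shows "tyurin_local SO \<sigma> \<alpha> (\<lambda>\<zeta>. F \<zeta> - G \<zeta>)"
proof -
  obtain \<beta> \<kappa> B where b: "bil \<beta> \<alpha> = 0" and B: "B *v \<alpha> = \<kappa> *s \<alpha>"
    and oF: "ord0_ge (\<lambda>\<zeta>. F \<zeta> - cmat (inverse \<zeta>) (outer \<alpha> \<beta> - outer \<beta> \<alpha>) - B) 1"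
    using F tyurin_local_SO by blast
  obtain \<beta>' \<kappa>' B' where b': "bil \<beta>' \<alpha> = 0" and B': "B' *v \<alpha> = \<kappa>' *s \<alpha>"
    and oG: "ord0_ge (\<lambda>\<zeta>. G \<zeta> - cmat (inverse \<zeta>) (outer \<alpha> \<beta>' - outer \<beta>' \<alpha>) - B') 1"
    using G tyurin_local_SO by blast
  have "ord0_ge (\<lambda>\<zeta>. (F \<zeta> - G \<zeta>)
      - cmat (inverse \<zeta>) (outer \<alpha> (\<beta> - \<beta>') - outer (\<beta> - \<beta>') \<alpha>) - (B - B')) 1"
    by (rule ord0_ge_cong[OF ord0_ge_diff[OF oF oG]])
       (simp add: outer_diff1 outer_diff2 cmat_diff cmat_add algebra_simps)
  moreover have "bil (\<beta> - \<beta>') \<alpha> = 0" "(B - B') *v \<alpha> = (\<kappa> - \<kappa>') *s \<alpha>"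
    using b b' B B' by (simp_all add: bil_diff1 matrix_vector_mult_diff_rdistrib
        vector_sub_rdistrib)
  ultimately show ?thesis
    using tyurin_local_SO by blast
qed

lemma tyurin_local_diff_SP:
  assumes F: "tyurin_local SP \<sigma> \<alpha> F" and G: "tyurin_local SP \<sigma> \<alpha> G"
  shows "tyurin_local SP \<sigma> \<alpha> (\<lambda>\<zeta>. F \<zeta> - G \<zeta>)"
proof -
  let ?E = "outer \<alpha> \<alpha> ** \<sigma>"
  obtain \<beta> \<nu> \<kappa> B C where b: "bil \<beta> (\<sigma> *v \<alpha>) = 0" and B: "B *v \<alpha> = \<kappa> *s \<alpha>"
    and c: "bil \<alpha> (\<sigma> *v (C *v \<alpha>)) = 0"
    and oF: "ord0_ge (\<lambda>\<zeta>. F \<zeta> - cmat (inverse (\<zeta>^2)) (cmat \<nu> ?E)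
                       - cmat (inverse \<zeta>) (sym_outer \<sigma> \<alpha> \<beta>) - B - cmat \<zeta> C) 2"
    using F tyurin_local_SP by blast
  obtain \<beta>' \<nu>' \<kappa>' B' C' where b': "bil \<beta>' (\<sigma> *v \<alpha>) = 0" and B': "B' *v \<alpha> = \<kappa>' *s \<alpha>"
    and c': "bil \<alpha> (\<sigma> *v (C' *v \<alpha>)) = 0"
    and oG: "ord0_ge (\<lambda>\<zeta>. G \<zeta> - cmat (inverse (\<zeta>^2)) (cmat \<nu>' ?E)
                       - cmat (inverse \<zeta>) (sym_outer \<sigma> \<alpha> \<beta>') - B' - cmat \<zeta> C') 2"
    using G tyurin_local_SP by blast
  have "ord0_ge (\<lambda>\<zeta>. (F \<zeta> - G \<zeta>) - cmat (inverse (\<zeta>^2)) (cmat (\<nu> - \<nu>') ?E)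
      - cmat (inverse \<zeta>) (sym_outer \<sigma> \<alpha> (\<beta> - \<beta>')) - (B - B') - cmat \<zeta> (C - C')) 2"
    by (rule ord0_ge_cong[OF ord0_ge_diff[OF oF oG]])
       (simp only: sym_outer_diff cmat_diff cmat_diff_left, simp add: algebra_simps)
  moreover have "bil (\<beta> - \<beta>') (\<sigma> *v \<alpha>) = 0" "(B - B') *v \<alpha> = (\<kappa> - \<kappa>') *s \<alpha>"
    "bil \<alpha> (\<sigma> *v ((C - C') *v \<alpha>)) = 0"
    using b b' B B' c c'
    by (simp_all add: bil_diff1 bil_diff2 matrix_vector_mult_diff_rdistrib
        matrix_vector_mult_diff_distrib vector_sub_rdistrib)
  ultimately show ?thesis
    using tyurin_local_SP by blast
qed

lemma tyurin_local_diff: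
  "tyurin_local kd \<sigma> \<alpha> F \<Longrightarrow> tyurin_local kd \<sigma> \<alpha> G \<Longrightarrow> tyurin_local kd \<sigma> \<alpha> (\<lambda>\<zeta>. F \<zeta> - G \<zeta>)"
  by (cases kd) (auto intro: tyurin_local_diff_GL tyurin_local_diff_SO tyurin_local_diff_SP)

lemma tyurin_local_GL_prefix:
  assumes kd: "kd \<noteq> SO" "kd \<noteq> SP" and F: "tyurin_local kd \<sigma> \<alpha> F"
  obtains \<beta> \<kappa> B X where "bil \<beta> \<alpha> = 0" "B *v \<alpha> = \<kappa> *s \<alpha>"
    "laurent_prefix F (-1) 3 (nth [outer \<alpha> \<beta>, B, X])"
proof -
  obtain \<beta> \<kappa> B where b: "bil \<beta> \<alpha> = 0" and B: "B *v \<alpha> = \<kappa> *s \<alpha>"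
    and oF: "ord0_ge (\<lambda>\<zeta>. F \<zeta> - cmat (inverse \<zeta>) (outer \<alpha> \<beta>) - B) 1"
    using F tyurin_local_GL[OF kd] by blast
  have "laurent_prefix F (-1) (length [outer \<alpha> \<beta>, B]) (nth [outer \<alpha> \<beta>, B])"
    unfolding laurent_prefix_def
    by (rule ord0_ge_cong'[OF oF]) (simp_all add: laurent_poly_Suc algebra_simps)
  then obtain X where "laurent_prefix F (-1) (Suc (length [outer \<alpha> \<beta>, B])) (nth [outer \<alpha> \<beta>, B, X])"
    by (rule laurent_prefix_snoc) simp
  then have "laurent_prefix F (-1) 3 (nth [outer \<alpha> \<beta>, B, X])"
    by (simp add: numeral_eq_Suc)
  with b B show ?thesis by (rule that)
qed

lemma tyurin_local_comm_GL:
  assumes kd: "kd \<noteq> SO" "kd \<noteq> SP" and F: "tyurin_local kd \<sigma> \<alpha> F" and G: "tyurin_local kd \<sigma> \<alpha> G"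
  shows "tyurin_local kd \<sigma> \<alpha> (\<lambda>\<zeta>. comm (F \<zeta>) (G \<zeta>))"
proof -
  obtain \<beta> \<kappa> B X where b: "bil \<beta> \<alpha> = 0" and B: "B *v \<alpha> = \<kappa> *s \<alpha>"
    and eF: "laurent_prefix F (-1) 3 (nth [outer \<alpha> \<beta>, B, X])"
    using tyurin_local_GL_prefix[OF kd F] .
  obtain \<beta>' \<kappa>' B' Y where b': "bil \<beta>' \<alpha> = 0" and B': "B' *v \<alpha> = \<kappa>' *s \<alpha>"
    and eG: "laurent_prefix G (-1) 3 (nth [outer \<alpha> \<beta>', B', Y])"
    using tyurin_local_GL_prefix[OF kd G] .
  note coeffs = gl_tyurin_coeffs[OF b b' B B']
  let ?\<gamma> = "transpose B' *v \<beta> + \<kappa> *s \<beta>' - transpose B *v \<beta>' - \<kappa>' *s \<beta>"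
  let ?L0 = "comm (outer \<alpha> \<beta>) Y + comm B B' + comm X (outer \<alpha> \<beta>')"
  have res: "comm B (outer \<alpha> \<beta>') + comm (outer \<alpha> \<beta>) B' = outer \<alpha> ?\<gamma>"
    using coeffs(2) by (simp add: add.commute)
  from laurent_prefix_comm[OF eF eG]
  have "ord0_ge (\<lambda>\<zeta>. comm (F \<zeta>) (G \<zeta>) - cmat (inverse \<zeta>) (outer \<alpha> ?\<gamma>) - ?L0) 1"
    unfolding laurent_prefix_def
    by (elim ord0_ge_cong')
       (simp_all add: laurent_poly_Suc numeral_eq_Suc atMost_Suc coeffs(1) res algebra_simps)
  with coeffs(3,4) show ?thesis
    using tyurin_local_GL[OF kd] by blast
qed

lemma tyurin_local_SO_prefix:
  assumes F: "tyurin_local SO \<sigma> \<alpha> F" and so: "eventually (\<lambda>\<zeta>. in_lie SO \<sigma> (F \<zeta>)) (at 0)"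
  obtains \<beta> \<kappa> B X where "bil \<beta> \<alpha> = 0" "B *v \<alpha> = \<kappa> *s \<alpha>"
    "transpose B = - B" "transpose X = - X"
    "laurent_prefix F (-1) 3 (nth [outer \<alpha> \<beta> - outer \<beta> \<alpha>, B, X])"
proof -
  obtain \<beta> \<kappa> B where b: "bil \<beta> \<alpha> = 0" and B: "B *v \<alpha> = \<kappa> *s \<alpha>"
    and oF: "ord0_ge (\<lambda>\<zeta>. F \<zeta> - cmat (inverse \<zeta>) (outer \<alpha> \<beta> - outer \<beta> \<alpha>) - B) 1"
    using F tyurin_local_SO by blast
  have "laurent_prefix F (-1) (length [outer \<alpha> \<beta> - outer \<beta> \<alpha>, B]) (nth [outer \<alpha> \<beta> - outer \<beta> \<alpha>, B])"
    unfolding laurent_prefix_def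
    by (rule ord0_ge_cong'[OF oF]) (simp_all add: laurent_poly_Suc algebra_simps)
  then obtain X where "laurent_prefix F (-1) (Suc (length [outer \<alpha> \<beta> - outer \<beta> \<alpha>, B]))
      (nth [outer \<alpha> \<beta> - outer \<beta> \<alpha>, B, X])"
    by (rule laurent_prefix_snoc) simp
  then have eF: "laurent_prefix F (-1) 3 (nth [outer \<alpha> \<beta> - outer \<beta> \<alpha>, B, X])"
    by (simp add: numeral_eq_Suc)
  have "form_defect (mat 1) ([outer \<alpha> \<beta> - outer \<beta> \<alpha>, B, X] ! j) = 0" if "j < 3" for j
    using laurent_prefix_form_defect[OF eF _ that] so by (simp add: in_lie_SO_iff)
  from this[of 1] this[of 2] have "transpose B = - B" "transpose X = - X"
    by (simp_all add: form_defect_def eq_neg_iff_add_eq_0)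
  then show ?thesis by (intro that[OF b B _ _ eF])
qed

lemma tyurin_local_comm_SO:
  assumes aa: "bil \<alpha> \<alpha> = 0" and F: "tyurin_local SO \<sigma> \<alpha> F" and G: "tyurin_local SO \<sigma> \<alpha> G"
    and soF: "eventually (\<lambda>\<zeta>. in_lie SO \<sigma> (F \<zeta>)) (at 0)"
    and soG: "eventually (\<lambda>\<zeta>. in_lie SO \<sigma> (G \<zeta>)) (at 0)"
  shows "tyurin_local SO \<sigma> \<alpha> (\<lambda>\<zeta>. comm (F \<zeta>) (G \<zeta>))"
proof -
  obtain \<beta> \<kappa> B X where b: "bil \<beta> \<alpha> = 0" and B: "B *v \<alpha> = \<kappa> *s \<alpha>"
    and Bt: "transpose B = - B" and Xt: "transpose X = - X"
    and eF: "laurent_prefix F (-1) 3 (nth [outer \<alpha> \<beta> - outer \<beta> \<alpha>, B, X])"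
    using tyurin_local_SO_prefix[OF F soF] .
  obtain \<beta>' \<kappa>' B' Y where b': "bil \<beta>' \<alpha> = 0" and B': "B' *v \<alpha> = \<kappa>' *s \<alpha>"
    and Bt': "transpose B' = - B'" and Yt: "transpose Y = - Y"
    and eG: "laurent_prefix G (-1) 3 (nth [outer \<alpha> \<beta>' - outer \<beta>' \<alpha>, B', Y])"
    using tyurin_local_SO_prefix[OF G soG] .
  note coeffs = so_tyurin_coeffs[OF aa b b' B B' Bt Bt' Xt Yt]
  let ?\<gamma> = "B *v \<beta>' + \<kappa> *s \<beta>' - B' *v \<beta> - \<kappa>' *s \<beta>"
  let ?L0 = "comm (outer \<alpha> \<beta> - outer \<beta> \<alpha>) Y + comm B B' + comm X (outer \<alpha> \<beta>' - outer \<beta>' \<alpha>)"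
  have res: "comm B (outer \<alpha> \<beta>' - outer \<beta>' \<alpha>) + comm (outer \<alpha> \<beta> - outer \<beta> \<alpha>) B'
      = outer \<alpha> ?\<gamma> - outer ?\<gamma> \<alpha>"
    using coeffs(2) by (simp add: add.commute)
  from laurent_prefix_comm[OF eF eG]
  have "ord0_ge (\<lambda>\<zeta>. comm (F \<zeta>) (G \<zeta>) - cmat (inverse \<zeta>) (outer \<alpha> ?\<gamma> - outer ?\<gamma> \<alpha>) - ?L0) 1"
    unfolding laurent_prefix_def
    by (elim ord0_ge_cong')
       (simp_all add: laurent_poly_Suc numeral_eq_Suc atMost_Suc coeffs(1) res algebra_simps)
  with coeffs(3,4) show ?thesis
    using tyurin_local_SO by blast
qed

lemma power_int_minus_two: "(z::complex) powi (-2) = inverse (z^2)"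
  by (simp add: power_int_def power_inverse)

lemma tyurin_local_SP_prefix:
  assumes F: "tyurin_local SP \<sigma> \<alpha> F" and sp: "eventually (\<lambda>\<zeta>. in_lie SP \<sigma> (F \<zeta>)) (at 0)"
  obtains \<beta> \<nu> \<kappa> B C D L where "bil \<beta> (\<sigma> *v \<alpha>) = 0" "B *v \<alpha> = \<kappa> *s \<alpha>"
    "bil \<alpha> (\<sigma> *v (C *v \<alpha>)) = 0" "form_defect \<sigma> B = 0" "form_defect \<sigma> C = 0"
    "laurent_prefix F (-2) 6 (nth [cmat \<nu> (outer \<alpha> \<alpha> ** \<sigma>), sym_outer \<sigma> \<alpha> \<beta>, B, C, D, L])"
proof -
  let ?E = "outer \<alpha> \<alpha> ** \<sigma>"
  obtain \<beta> \<nu> \<kappa> B C where b: "bil \<beta> (\<sigma> *v \<alpha>) = 0" and B: "B *v \<alpha> = \<kappa> *s \<alpha>"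
    and c: "bil \<alpha> (\<sigma> *v (C *v \<alpha>)) = 0"
    and oF: "ord0_ge (\<lambda>\<zeta>. F \<zeta> - cmat (inverse (\<zeta>^2)) (cmat \<nu> ?E)
                       - cmat (inverse \<zeta>) (sym_outer \<sigma> \<alpha> \<beta>) - B - cmat \<zeta> C) 2"
    using F tyurin_local_SP by blast
  let ?xs = "[cmat \<nu> ?E, sym_outer \<sigma> \<alpha> \<beta>, B, C]"
  have "laurent_prefix F (-2) (length ?xs) (nth ?xs)"
    unfolding laurent_prefix_def
    by (rule ord0_ge_cong'[OF oF])
       (simp_all add: laurent_poly_Suc power_int_minus_two algebra_simps)
  then obtain D where "laurent_prefix F (-2) (length (?xs @ [D])) (nth (?xs @ [D]))"
    by (rule laurent_prefix_snoc) simp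
  then obtain L where "laurent_prefix F (-2) (Suc (length (?xs @ [D]))) (nth (?xs @ [D, L]))"
    by (rule laurent_prefix_snoc) simp
  then have eF: "laurent_prefix F (-2) 6 (nth [cmat \<nu> ?E, sym_outer \<sigma> \<alpha> \<beta>, B, C, D, L])"
    by (simp add: numeral_eq_Suc)
  have "form_defect \<sigma> ([cmat \<nu> ?E, sym_outer \<sigma> \<alpha> \<beta>, B, C, D, L] ! j) = 0" if "j < 6" for j
    using laurent_prefix_form_defect[OF eF _ that] sp by (simp add: in_lie_SP_iff)
  from this[of 2] this[of 3] have "form_defect \<sigma> B = 0" "form_defect \<sigma> C = 0"
    by (simp_all add: numeral_eq_Suc)
  then show ?thesis by (intro that[OF b B c _ _ eF])
qed

text \<open>The expansion of the commutator starts at order \<open>-4\<close>, so \<open>\<Gamma> l\<close> below is the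
  coefficient of \<open>\<zeta> powi (l - 4)\<close>; the lemmas \<open>sp_comm_order_\<dots>\<close> are named after
  these orders.\<close>

lemma tyurin_local_comm_SP:
  assumes st: "transpose \<sigma> = - \<sigma>" and F: "tyurin_local SP \<sigma> \<alpha> F" and G: "tyurin_local SP \<sigma> \<alpha> G"
    and spF: "eventually (\<lambda>\<zeta>. in_lie SP \<sigma> (F \<zeta>)) (at 0)"
    and spG: "eventually (\<lambda>\<zeta>. in_lie SP \<sigma> (G \<zeta>)) (at 0)"
  shows "tyurin_local SP \<sigma> \<alpha> (\<lambda>\<zeta>. comm (F \<zeta>) (G \<zeta>))"
proof -
  let ?E = "outer \<alpha> \<alpha> ** \<sigma>"
  obtain \<beta> \<nu> \<kappa> B C D L where b: "bil \<beta> (\<sigma> *v \<alpha>) = 0" and B: "B *v \<alpha> = \<kappa> *s \<alpha>"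
    and c: "bil \<alpha> (\<sigma> *v (C *v \<alpha>)) = 0" and sB: "form_defect \<sigma> B = 0"
    and sC: "form_defect \<sigma> C = 0"
    and eF: "laurent_prefix F (-2) 6 (nth [cmat \<nu> ?E, sym_outer \<sigma> \<alpha> \<beta>, B, C, D, L])"
    using tyurin_local_SP_prefix[OF F spF] .
  obtain \<beta>' \<nu>' \<kappa>' B' C' D' L' where b': "bil \<beta>' (\<sigma> *v \<alpha>) = 0" and B': "B' *v \<alpha> = \<kappa>' *s \<alpha>"
    and c': "bil \<alpha> (\<sigma> *v (C' *v \<alpha>)) = 0" and sB': "form_defect \<sigma> B' = 0"
    and sC': "form_defect \<sigma> C' = 0"
    and eG: "laurent_prefix G (-2) 6 (nth [cmat \<nu>' ?E, sym_outer \<sigma> \<alpha> \<beta>', B', C', D', L'])"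
    using tyurin_local_SP_prefix[OF G spG] .
  define \<Gamma> where "\<Gamma> = (\<lambda>l. \<Sum>i\<le>l. comm ([cmat \<nu> ?E, sym_outer \<sigma> \<alpha> \<beta>, B, C, D, L] ! i)
                                  ([cmat \<nu>' ?E, sym_outer \<sigma> \<alpha> \<beta>', B', C', D', L'] ! (l - i)))"
  have ec: "laurent_prefix (\<lambda>\<zeta>. comm (F \<zeta>) (G \<zeta>)) (-4) 6 \<Gamma>"
    using laurent_prefix_comm[OF eF eG] by (simp add: \<Gamma>_def)
  define \<gamma> where "\<gamma> = - (\<nu> *s (C' *v \<alpha>)) - (B' *v \<beta> + \<kappa>' *s \<beta>) + (B *v \<beta>' + \<kappa> *s \<beta>')
                     + \<nu>' *s (C *v \<alpha>)"
  define \<nu>\<^sub>0 where "\<nu>\<^sub>0 = 2 * (\<nu>' * \<kappa> - \<nu> * \<kappa>' + bil \<beta> (\<sigma> *v \<beta>'))"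
  define \<kappa>\<^sub>0 where "\<kappa>\<^sub>0 = \<nu> * bil \<alpha> (\<sigma> *v (D' *v \<alpha>)) + bil \<beta> (\<sigma> *v (C' *v \<alpha>))
                     - bil \<beta>' (\<sigma> *v (C *v \<alpha>)) - \<nu>' * bil \<alpha> (\<sigma> *v (D *v \<alpha>))"
  note sums = \<Gamma>_def atMost_Suc numeral_eq_Suc add_ac
  have "\<Gamma> 0 = 0"
    by (simp add: \<Gamma>_def comm_cmat_left comm_cmat_right)
  moreover have "\<Gamma> (Suc 0) = 0"
    using sp_comm_order_minus3[where \<nu>=\<nu> and \<nu>'=\<nu>', OF st b b'] by (simp add: \<Gamma>_def add_ac)
  moreover have "\<Gamma> (Suc (Suc 0)) = cmat \<nu>\<^sub>0 ?E"
    using sp_comm_order_minus2[where \<nu>=\<nu> and \<nu>'=\<nu>', OF st b b' sB sB' B B']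
    by (simp add: sums \<nu>\<^sub>0_def)
  moreover have "\<Gamma> (Suc (Suc (Suc 0))) = sym_outer \<sigma> \<alpha> \<gamma>" and g: "bil \<gamma> (\<sigma> *v \<alpha>) = 0"
    using sp_comm_order_minus1[where \<nu>=\<nu> and \<nu>'=\<nu>', OF st b b' sB sB' sC sC' B B' c c']
    by (simp_all add: sums \<gamma>_def)
  ultimately have "ord0_ge (\<lambda>\<zeta>. comm (F \<zeta>) (G \<zeta>) - cmat (inverse (\<zeta>^2)) (cmat \<nu>\<^sub>0 ?E)
      - cmat (inverse \<zeta>) (sym_outer \<sigma> \<alpha> \<gamma>) - \<Gamma> 4 - cmat \<zeta> (\<Gamma> 5)) 2"
    using ec unfolding laurent_prefix_def
    by (elim ord0_ge_cong')
       (simp_all add: laurent_poly_Suc numeral_eq_Suc power_int_minus_two[unfolded numeral_eq_Suc]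
         algebra_simps)
  moreover have "\<Gamma> 4 *v \<alpha> = \<kappa>\<^sub>0 *s \<alpha>"
    using sp_comm_order_0[where \<nu>=\<nu> and \<nu>'=\<nu>' and D=D and D'=D', OF st b b' B B' c c']
    by (simp add: sums \<kappa>\<^sub>0_def)
  moreover have "bil \<alpha> (\<sigma> *v (\<Gamma> 5 *v \<alpha>)) = 0"
    using sp_comm_order_1[where \<nu>=\<nu> and \<nu>'=\<nu>' and D=D and D'=D' and L=L and L'=L',
        OF st b b' sB sB' B B' c c']
    by (simp add: sums)
  ultimately show ?thesis
    using g tyurin_local_SP by blast
qed

lemma tyurin_local_comm:
  assumes "tyurin_local kd \<sigma> \<alpha> F" "tyurin_local kd \<sigma> \<alpha> G"
    and "eventually (\<lambda>\<zeta>. in_lie kd \<sigma> (F \<zeta>)) (at 0)" "eventually (\<lambda>\<zeta>. in_lie kd \<sigma> (G \<zeta>)) (at 0)"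
    and "kd = SP \<Longrightarrow> transpose \<sigma> = - \<sigma>" and "kd = SO \<Longrightarrow> bil \<alpha> \<alpha> = 0"
  shows "tyurin_local kd \<sigma> \<alpha> (\<lambda>\<zeta>. comm (F \<zeta>) (G \<zeta>))"
  using assms
  by (cases kd) (auto intro: tyurin_local_comm_GL tyurin_local_comm_SO tyurin_local_comm_SP)

section \<open>Charts\<close>

lemma chart_inj: "is_chart U \<phi> \<Longrightarrow> inj_on \<phi> U"
  unfolding is_chart_def homeomorphism_def by (metis inj_on_inverseI)

lemma chart_open: "is_chart U \<phi> \<Longrightarrow> open U" "is_chart U \<phi> \<Longrightarrow> open (\<phi> ` U)"
  by (auto simp: is_chart_def)

lemma chart_inv_into_f: "is_chart U \<phi> \<Longrightarrow> x \<in> U \<Longrightarrow> inv_into U \<phi> (\<phi> x) = x"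
  by (rule inv_into_f_f[OF chart_inj])

lemma chart_open_image:
  assumes "is_chart U \<phi>" "open V" "V \<subseteq> U"
  shows "open (\<phi> ` V)"
proof -
  obtain g where h: "homeomorphism U (\<phi> ` U) \<phi> g" using assms(1) by (auto simp: is_chart_def)
  have "openin (top_of_set (\<phi> ` U)) (\<phi> ` V)"
    by (rule homeomorphism_imp_open_map[OF h]) (use assms in \<open>simp add: open_subset\<close>)
  then show ?thesis using chart_open(2)[OF assms(1)] by (rule openin_open_trans)
qed

lemma eventually_transition_inv:
  assumes U: "is_chart U \<phi>" and V: "is_chart V \<psi>" and p: "p \<in> U" "p \<in> V"
  shows "eventually (\<lambda>\<zeta>. inv_into V \<psi> ((\<psi> \<circ> inv_into U \<phi>) \<zeta>) = inv_into U \<phi> \<zeta>) (nhds (\<phi> p))"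
proof -
  have o: "open (\<phi> ` (U \<inter> V))"
    by (rule chart_open_image[OF U]) (use chart_open[OF U] chart_open[OF V] in auto)
  have "eventually (\<lambda>\<zeta>. \<zeta> \<in> \<phi> ` (U \<inter> V)) (nhds (\<phi> p))"
    by (rule eventually_nhds_in_open[OF o]) (use p in auto)
  then show ?thesis
  proof eventually_elim
    case (elim \<zeta>)
    then obtain y where y: "y \<in> U \<inter> V" "\<zeta> = \<phi> y" by auto
    then have "inv_into U \<phi> \<zeta> = y" using chart_inv_into_f[OF U] by auto
    then show ?case using y chart_inv_into_f[OF V] by auto
  qed
qed

lemma transition_map_analytic:
  assumes U: "is_chart U \<phi>" and V: "is_chart V \<psi>"
    and hol: "(\<psi> \<circ> inv_into U \<phi>) holomorphic_on \<phi> ` (U \<inter> V)" and p: "p \<in> U" "p \<in> V"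
  shows "(\<psi> \<circ> inv_into U \<phi>) analytic_on {\<phi> p}" "(\<psi> \<circ> inv_into U \<phi>) ` {\<phi> p} = {\<psi> p}"
proof -
  have o: "open (\<phi> ` (U \<inter> V))"
    by (rule chart_open_image[OF U]) (use chart_open[OF U] chart_open[OF V] in auto)
  have "(\<psi> \<circ> inv_into U \<phi>) analytic_on \<phi> ` (U \<inter> V)" using hol o by (simp add: analytic_on_open)
  then show "(\<psi> \<circ> inv_into U \<phi>) analytic_on {\<phi> p}" by (rule analytic_on_subset) (use p in auto)
  show "(\<psi> \<circ> inv_into U \<phi>) ` {\<phi> p} = {\<psi> p}" using chart_inv_into_f[OF U p(1)] by simp
qed

lemma analytic_on_chart_transfer:
  assumes U: "is_chart U \<phi>" and V: "is_chart V \<psi>"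
    and hol: "(\<psi> \<circ> inv_into U \<phi>) holomorphic_on \<phi> ` (U \<inter> V)" and p: "p \<in> U" "p \<in> V"
    and f: "(\<lambda>\<zeta>. f (inv_into V \<psi> \<zeta>)) analytic_on {\<psi> p}"
  shows "(\<lambda>\<zeta>. f (inv_into U \<phi> \<zeta>)) analytic_on {\<phi> p}"
proof -
  note tm = transition_map_analytic[OF U V hol p]
  have c: "((\<lambda>\<zeta>. f (inv_into V \<psi> \<zeta>)) \<circ> (\<psi> \<circ> inv_into U \<phi>)) analytic_on {\<phi> p}"
    by (rule analytic_on_compose[OF tm(1)]) (use f tm(2) in simp)
  have ev: "eventually (\<lambda>\<zeta>. ((\<lambda>\<zeta>. f (inv_into V \<psi> \<zeta>)) \<circ> (\<psi> \<circ> inv_into U \<phi>)) \<zeta>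
      = f (inv_into U \<phi> \<zeta>)) (nhds (\<phi> p))"
    using eventually_transition_inv[OF U V p] by eventually_elim simp
  show ?thesis using analytic_at_cong[OF ev refl] c by (simp add: o_def)
qed

lemma meromorphic_on_chart_transfer:
  assumes U: "is_chart U \<phi>" and V: "is_chart V \<psi>"
    and hol: "(\<psi> \<circ> inv_into U \<phi>) holomorphic_on \<phi> ` (U \<inter> V)" and p: "p \<in> U" "p \<in> V"
    and f: "(\<lambda>\<zeta>. f (inv_into V \<psi> \<zeta>)) meromorphic_on {\<psi> p}"
  shows "(\<lambda>\<zeta>. f (inv_into U \<phi> \<zeta>)) meromorphic_on {\<phi> p}"
proof -
  note tm = transition_map_analytic[OF U V hol p]
  have "(\<lambda>w. (\<lambda>\<zeta>. f (inv_into V \<psi> \<zeta>)) ((\<psi> \<circ> inv_into U \<phi>) w)) meromorphic_on {\<phi> p}"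
    by (rule meromorphic_on_compose[OF f tm(1)]) (use tm(2) in simp)
  moreover have "eventually (\<lambda>\<zeta>. (\<lambda>\<zeta>. f (inv_into V \<psi> \<zeta>)) ((\<psi> \<circ> inv_into U \<phi>) \<zeta>)
      = f (inv_into U \<phi> \<zeta>)) (at (\<phi> p))"
    using eventually_transition_inv[OF U V p] unfolding eventually_at_filter by eventually_elim simp
  ultimately show ?thesis
    by (subst (asm) meromorphic_on_cong) auto
qed

lemma atlas_chart: "compact_riemann_surface atlas \<Longrightarrow> (U, \<phi>) \<in> atlas \<Longrightarrow> is_chart U \<phi>"
  unfolding compact_riemann_surface_def by blast

lemma atlas_transition_holomorphic:
  "compact_riemann_surface atlas \<Longrightarrow> (U, \<phi>) \<in> atlas \<Longrightarrow> (V, \<psi>) \<in> atlas \<Longrightarrow>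
    (\<psi> \<circ> inv_into U \<phi>) holomorphic_on (\<phi> ` (U \<inter> V))"
  unfolding compact_riemann_surface_def charts_compatible_def by blast

lemma holomorphic_at_chart:
  fixes L :: "'s::t2_space \<Rightarrow> 'n::finite mat"
  assumes surf: "compact_riemann_surface atlas" and h: "holomorphic_at atlas L x"
    and U: "(U, \<phi>) \<in> atlas" "x \<in> U"
  shows "(\<lambda>\<zeta>. L (inv_into U \<phi> \<zeta>) $ i $ j) analytic_on {\<phi> x}"
proof -
  obtain V \<psi> where V: "(V, \<psi>) \<in> atlas" "x \<in> V"
    and a: "(\<lambda>\<zeta>. L (inv_into V \<psi> \<zeta>) $ i $ j) analytic_on {\<psi> x}"
    using h unfolding holomorphic_at_def by blast
  show ?thesis
    by (rule analytic_on_chart_transfer[OF atlas_chart[OF surf U(1)] atlas_chart[OF surf V(1)]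
          atlas_transition_holomorphic[OF surf U(1) V(1)] U(2) V(2), of "\<lambda>y. L y $ i $ j"])
       (use a in simp)
qed

lemma meromorphic_at_chart:
  fixes L :: "'s::t2_space \<Rightarrow> 'n::finite mat"
  assumes surf: "compact_riemann_surface atlas" and h: "meromorphic_at atlas L x"
    and U: "(U, \<phi>) \<in> atlas" "x \<in> U"
  shows "(\<lambda>\<zeta>. L (inv_into U \<phi> \<zeta>) $ i $ j) meromorphic_on {\<phi> x}"
proof -
  obtain V \<psi> where V: "(V, \<psi>) \<in> atlas" "x \<in> V"
    and a: "(\<lambda>\<zeta>. L (inv_into V \<psi> \<zeta>) $ i $ j) meromorphic_on {\<psi> x}"
    using h unfolding meromorphic_at_def by blast
  show ?thesis
    by (rule meromorphic_on_chart_transfer[OF atlas_chart[OF surf U(1)] atlas_chart[OF surf V(1)]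
          atlas_transition_holomorphic[OF surf U(1) V(1)] U(2) V(2), of "\<lambda>y. L y $ i $ j"])
       (use a in simp)
qed

lemma holomorphic_at_comm:
  fixes L L' :: "'s::t2_space \<Rightarrow> 'n::finite mat"
  assumes surf: "compact_riemann_surface atlas"
    and h: "holomorphic_at atlas L x" "holomorphic_at atlas L' x"
  shows "holomorphic_at atlas (\<lambda>x. comm (L x) (L' x)) x"
proof -
  obtain U \<phi> where U: "(U, \<phi>) \<in> atlas" "x \<in> U"
    using h(1) unfolding holomorphic_at_def by blast
  note a = holomorphic_at_chart[OF surf h(1) U] holomorphic_at_chart[OF surf h(2) U]
  have "\<forall>i j. (\<lambda>\<zeta>. comm (L (inv_into U \<phi> \<zeta>)) (L' (inv_into U \<phi> \<zeta>)) $ i $ j) analytic_on {\<phi> x}"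
    unfolding comm_entry by (intro allI analytic_intros a)
  with U show ?thesis
    unfolding holomorphic_at_def by blast
qed

lemma holomorphic_at_diff:
  fixes L L' :: "'s::t2_space \<Rightarrow> 'n::finite mat"
  assumes surf: "compact_riemann_surface atlas"
    and h: "holomorphic_at atlas L x" "holomorphic_at atlas L' x"
  shows "holomorphic_at atlas (\<lambda>x. L x - L' x) x"
proof -
  obtain U \<phi> where U: "(U, \<phi>) \<in> atlas" "x \<in> U"
    using h(1) unfolding holomorphic_at_def by blast
  note a = holomorphic_at_chart[OF surf h(1) U] holomorphic_at_chart[OF surf h(2) U]
  have "\<forall>i j. (\<lambda>\<zeta>. (L (inv_into U \<phi> \<zeta>) - L' (inv_into U \<phi> \<zeta>)) $ i $ j) analytic_on {\<phi> x}"
    by (simp, intro allI analytic_intros a)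
  with U show ?thesis
    unfolding holomorphic_at_def by blast
qed

lemma meromorphic_at_comm:
  fixes L L' :: "'s::t2_space \<Rightarrow> 'n::finite mat"
  assumes surf: "compact_riemann_surface atlas"
    and h: "meromorphic_at atlas L x" "meromorphic_at atlas L' x"
  shows "meromorphic_at atlas (\<lambda>x. comm (L x) (L' x)) x"
proof -
  obtain U \<phi> where U: "(U, \<phi>) \<in> atlas" "x \<in> U"
    using h(1) unfolding meromorphic_at_def by blast
  note a = meromorphic_at_chart[OF surf h(1) U] meromorphic_at_chart[OF surf h(2) U]
  have "\<forall>i j. (\<lambda>\<zeta>. comm (L (inv_into U \<phi> \<zeta>)) (L' (inv_into U \<phi> \<zeta>)) $ i $ j) meromorphic_on {\<phi> x}"
    unfolding comm_entry by (intro allI meromorphic_intros a)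
  with U show ?thesis
    unfolding meromorphic_at_def by blast
qed

lemma meromorphic_at_diff:
  fixes L L' :: "'s::t2_space \<Rightarrow> 'n::finite mat"
  assumes surf: "compact_riemann_surface atlas"
    and h: "meromorphic_at atlas L x" "meromorphic_at atlas L' x"
  shows "meromorphic_at atlas (\<lambda>x. L x - L' x) x"
proof -
  obtain U \<phi> where U: "(U, \<phi>) \<in> atlas" "x \<in> U"
    using h(1) unfolding meromorphic_at_def by blast
  note a = meromorphic_at_chart[OF surf h(1) U] meromorphic_at_chart[OF surf h(2) U]
  have "\<forall>i j. (\<lambda>\<zeta>. (L (inv_into U \<phi> \<zeta>) - L' (inv_into U \<phi> \<zeta>)) $ i $ j) meromorphic_on {\<phi> x}"
    by (simp, intro allI meromorphic_intros a)
  with U show ?thesis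
    unfolding meromorphic_at_def by blast
qed

lemma local_coordinate_chart:
  "local_coordinate_at atlas g c \<Longrightarrow> is_chart (fst c) (snd c) \<and> g \<in> fst c \<and> snd c g = 0"
  by (simp add: local_coordinate_at_def compatible_chart_def)

lemma eventually_in_coordinate_image:
  assumes "local_coordinate_at atlas g c"
  shows "eventually (\<lambda>\<zeta>. \<zeta> \<in> snd c ` fst c) (at 0)"
proof -
  note l = local_coordinate_chart[OF assms]
  have "0 \<in> snd c ` fst c" using l by (metis image_eqI)
  then have "eventually (\<lambda>\<zeta>. \<zeta> \<in> snd c ` fst c) (nhds 0)"
    using chart_open(2)[of "fst c" "snd c"] l by (intro eventually_nhds_in_open) auto
  then show ?thesis unfolding eventually_at_filter by eventually_elim simp
qed

lemma eventually_coordinate_inv: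
  assumes "local_coordinate_at atlas g c"
  shows "eventually (\<lambda>\<zeta>. snd c (inv_into (fst c) (snd c) \<zeta>) = \<zeta>) (at 0)"
  using eventually_in_coordinate_image[OF assms] by eventually_elim (auto intro: f_inv_into_f)

lemma tendsto_coordinate_inv:
  assumes lc: "local_coordinate_at atlas g c"
  shows "(inv_into (fst c) (snd c) \<longlongrightarrow> g) (at 0)"
proof -
  obtain U \<phi> where c: "c = (U, \<phi>)" by (cases c)
  note l = local_coordinate_chart[OF lc, unfolded c fst_conv snd_conv]
  obtain h where hom: "homeomorphism U (\<phi> ` U) \<phi> h"
    using l by (auto simp: is_chart_def)
  have "eventually (\<lambda>\<zeta>. h \<zeta> = inv_into U \<phi> \<zeta>) (at 0)"
    using eventually_in_coordinate_image[OF lc] unfolding c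
  proof eventually_elim
    case (elim \<zeta>)
    then obtain y where "y \<in> U" "\<zeta> = \<phi> y" by auto
    then show ?case
      using hom chart_inv_into_f[OF l[THEN conjunct1]] by (simp add: homeomorphism_def)
  qed
  moreover have "isCont h 0"
    using hom chart_open(2)[OF l[THEN conjunct1]] l
    by (metis continuous_on_eq_continuous_at homeomorphism_def image_eqI)
  then have "(h \<longlongrightarrow> g) (at 0)"
    using hom l by (metis homeomorphism_apply1 isCont_def)
  ultimately show ?thesis
    unfolding c by (simp add: tendsto_cong)
qed

lemma eventually_avoids_finite:
  fixes g :: "'s::t2_space"
  assumes lc: "local_coordinate_at atlas g c" and Z: "finite Z" and P: "\<And>x. x \<notin> Z \<Longrightarrow> P x"
  shows "eventually (\<lambda>\<zeta>. P (inv_into (fst c) (snd c) \<zeta>)) (at 0)"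
proof -
  have "eventually (\<lambda>\<zeta>. inv_into (fst c) (snd c) \<zeta> \<noteq> z) (at 0)" for z
  proof (cases "z = g")
    case True
    show ?thesis
      using eventually_coordinate_inv[OF lc] eventually_at0_nonzero
      by eventually_elim (use True local_coordinate_chart[OF lc] in auto)
  next
    case False
    then show ?thesis
      using tendsto_imp_eventually_ne[OF tendsto_coordinate_inv[OF lc]] by metis
  qed
  then have "eventually (\<lambda>\<zeta>. \<forall>z\<in>Z. inv_into (fst c) (snd c) \<zeta> \<noteq> z) (at 0)"
    by (intro eventually_ball_finite Z) auto
  then show ?thesis
    by eventually_elim (use P in auto)
qed
section \<open>The Lax operator algebra and its almost-graded structure\<close>

lemma in_lie_comm:
  assumes "in_lie kd \<sigma> X" "in_lie kd \<sigma> Y"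
  shows "in_lie kd \<sigma> (comm X Y)"
proof (cases kd)
  case SL
  then show ?thesis using assms
    by (simp add: in_lie_def comm_def trace_sub trace_mul_sym[of X Y])
next
  case SO
  then show ?thesis using assms
    by (simp add: in_lie_def comm_def transpose_diff matrix_transpose_mul matrix_uminus_left
        matrix_uminus_right)
next
  case SP
  have x: "transpose X ** \<sigma> = - (\<sigma> ** X)" and y: "transpose Y ** \<sigma> = - (\<sigma> ** Y)"
    using assms SP by (simp_all add: in_lie_def eq_neg_iff_add_eq_0)
  have swap: "transpose (A ** B) ** \<sigma> = \<sigma> ** B ** A"
    if a: "transpose A ** \<sigma> = - (\<sigma> ** A)" and b: "transpose B ** \<sigma> = - (\<sigma> ** B)" for A B
  proof -
    have "transpose (A ** B) ** \<sigma> = transpose B ** (transpose A ** \<sigma>)"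
      by (simp add: matrix_transpose_mul matrix_mul_assoc)
    also have "\<dots> = - ((transpose B ** \<sigma>) ** A)"
      by (simp add: a matrix_uminus_right matrix_mul_assoc)
    also have "\<dots> = \<sigma> ** B ** A"
      by (simp add: b matrix_uminus_left)
    finally show ?thesis .
  qed
  have "transpose (comm X Y) ** \<sigma> + \<sigma> ** comm X Y
      = (transpose (X ** Y) ** \<sigma> - transpose (Y ** X) ** \<sigma>) + (\<sigma> ** (X ** Y) - \<sigma> ** (Y ** X))"
    by (simp add: comm_def transpose_diff matrix_diff_rdistrib matrix_diff_ldistrib)
  also have "\<dots> = 0"
    by (simp add: swap[OF x y] swap[OF y x] matrix_mul_assoc)
  finally show ?thesis using SP by (simp add: in_lie_def)
qed (simp add: in_lie_def)

lemma in_lie_diff: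
  assumes "in_lie kd \<sigma> X" "in_lie kd \<sigma> Y"
  shows "in_lie kd \<sigma> (X - Y)"
  using assms form_defect_diff[of \<sigma> X Y]
  by (cases kd) (auto simp: in_lie_def trace_sub transpose_diff form_defect_def)

lemma ord0_ge_comm_leading:
  assumes F: "ord0_ge (\<lambda>\<zeta>. F \<zeta> - cmat (\<zeta> powi k) X) (k + 1)"
    and G: "ord0_ge (\<lambda>\<zeta>. G \<zeta> - cmat (\<zeta> powi m) Y) (m + 1)"
  shows "ord0_ge (\<lambda>\<zeta>. comm (F \<zeta>) (G \<zeta>) - cmat (\<zeta> powi (k + m)) (comm X Y)) (k + m + 1)"
proof -
  have "ord0_ge G m"
    using ord0_ge_add[OF ord0_ge_mono[OF G, of m] ord0_ge_monom[of m Y]] by simp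
  from ord0_ge_comm[OF F this]
  have "ord0_ge (\<lambda>\<zeta>. comm (F \<zeta> - cmat (\<zeta> powi k) X) (G \<zeta>)) (k + m + 1)"
    by (simp add: algebra_simps)
  moreover have "ord0_ge (\<lambda>\<zeta>. comm (cmat (\<zeta> powi k) X) (G \<zeta> - cmat (\<zeta> powi m) Y)) (k + m + 1)"
    using ord0_ge_comm[OF ord0_ge_monom[of k X] G] by (simp add: algebra_simps)
  ultimately have "ord0_ge (\<lambda>\<zeta>. comm (F \<zeta> - cmat (\<zeta> powi k) X) (G \<zeta>)
      + comm (cmat (\<zeta> powi k) X) (G \<zeta> - cmat (\<zeta> powi m) Y)) (k + m + 1)"
    by (rule ord0_ge_add)
  then show ?thesis
    by (rule ord0_ge_cong)
       (use eventually_at0_nonzero in \<open>eventually_elim, simp add: comm_def matrix_diff_ldistrib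
         matrix_diff_rdistrib cmat_diff power_int_add mult.commute[of "_ powi m"]\<close>)
qed

lemma ord_ge_coordinate_iff:
  assumes "local_coordinate_at atlas g c"
  shows "ord_ge c (\<lambda>x. H x (snd c x)) r \<longleftrightarrow> ord0_ge (\<lambda>\<zeta>. H (inv_into (fst c) (snd c) \<zeta>) \<zeta>) r"
proof -
  have ev: "eventually (\<lambda>\<zeta>. H (inv_into (fst c) (snd c) \<zeta>) (snd c (inv_into (fst c) (snd c) \<zeta>))
      = H (inv_into (fst c) (snd c) \<zeta>) \<zeta>) (at 0)"
    using eventually_coordinate_inv[OF assms] by eventually_elim simp
  have ev': "eventually (\<lambda>\<zeta>. H (inv_into (fst c) (snd c) \<zeta>) \<zeta>
      = H (inv_into (fst c) (snd c) \<zeta>) (snd c (inv_into (fst c) (snd c) \<zeta>))) (at 0)"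
    using ev by eventually_elim simp
  show ?thesis
    unfolding ord_ge_def in_coord_def
    using ord0_ge_cong[OF _ ev] ord0_ge_cong[OF _ ev'] by blast
qed

lemma is_Z_local:
  assumes zc: "\<And>q. q \<in> {1..N} \<Longrightarrow> local_coordinate_at atlas (P q) (zc q)"
    and q: "q \<in> {1..N}" and Z: "is_Z atlas kd \<sigma> A K \<gamma> \<alpha> wc N zc Z j t Zf"
  shows "ord0_ge (\<lambda>\<zeta>. in_coord (zc q) Zf \<zeta> - cmat (\<zeta> powi j) (if q = t then Z else 0)) (j + 1)"
proof -
  from Z q have "ord_ge (zc q) (\<lambda>x. Zf x - (if q = t then cmat (snd (zc q) x powi j) Z else 0))
      (j + 1)"
    by (simp add: is_Z_def)
  then have "ord0_ge (\<lambda>\<zeta>. in_coord (zc q) Zf \<zeta> - (if q = t then cmat (\<zeta> powi j) Z else 0)) (j + 1)"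
    using ord_ge_coordinate_iff[OF zc[OF q],
        of "\<lambda>x z. Zf x - (if q = t then cmat (z powi j) Z else 0)"]
    by (simp add: in_coord_def)
  then show ?thesis
    by (cases "q = t") simp_all
qed

locale lax_data =
  fixes atlas :: "('s::t2_space set \<times> ('s \<Rightarrow> complex)) set"
    and kd :: lie_kind and \<sigma> :: "'n::finite mat"
    and A :: "'s set" and K :: nat and \<gamma> :: "nat \<Rightarrow> 's" and \<alpha> :: "nat \<Rightarrow> complex^'n"
    and wc :: "nat \<Rightarrow> 's set \<times> ('s \<Rightarrow> complex)"
  assumes surf: "compact_riemann_surface atlas"
    and finite_A: "finite A"
    and wc: "\<And>s. s \<in> {1..K} \<Longrightarrow> local_coordinate_at atlas (\<gamma> s) (wc s)"
    and sp_skew: "kd = SP \<Longrightarrow> transpose \<sigma> = - \<sigma>"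
    and so_isotropic: "kd = SO \<Longrightarrow> s \<in> {1..K} \<Longrightarrow> bil (\<alpha> s) (\<alpha> s) = 0"
begin

lemma lax_algebraD:
  assumes "L \<in> lax_algebra atlas kd \<sigma> A K \<gamma> \<alpha> wc"
  shows "x \<notin> A \<union> \<gamma> ` {1..K} \<Longrightarrow> in_lie kd \<sigma> (L x) \<and> holomorphic_at atlas L x"
    and "x \<in> A \<union> \<gamma> ` {1..K} \<Longrightarrow> meromorphic_at atlas L x"
    and "s \<in> {1..K} \<Longrightarrow> tyurin_local kd \<sigma> (\<alpha> s) (in_coord (wc s) L)"
  using assms by (auto simp: lax_algebra_def tyurin_cond_iff_local)

lemma lax_algebra_eventually_in_lie:
  assumes "L \<in> lax_algebra atlas kd \<sigma> A K \<gamma> \<alpha> wc" "s \<in> {1..K}"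
  shows "eventually (\<lambda>\<zeta>. in_lie kd \<sigma> (in_coord (wc s) L \<zeta>)) (at 0)"
  unfolding in_coord_def
  by (rule eventually_avoids_finite[OF wc[OF assms(2)], of "A \<union> \<gamma> ` {1..K}"])
     (use finite_A lax_algebraD(1)[OF assms(1)] in auto)

lemma lax_algebra_comm:
  assumes L: "L \<in> lax_algebra atlas kd \<sigma> A K \<gamma> \<alpha> wc"
    and L': "L' \<in> lax_algebra atlas kd \<sigma> A K \<gamma> \<alpha> wc"
  shows "(\<lambda>x. comm (L x) (L' x)) \<in> lax_algebra atlas kd \<sigma> A K \<gamma> \<alpha> wc"
proof -
  have "tyurin_local kd \<sigma> (\<alpha> s) (\<lambda>\<zeta>. comm (in_coord (wc s) L \<zeta>) (in_coord (wc s) L' \<zeta>))"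
    if "s \<in> {1..K}" for s
    using that
    by (intro tyurin_local_comm lax_algebraD(3)[OF L] lax_algebraD(3)[OF L']
        lax_algebra_eventually_in_lie[OF L] lax_algebra_eventually_in_lie[OF L']
        sp_skew so_isotropic)
  then show ?thesis
    using lax_algebraD[OF L] lax_algebraD[OF L']
    by (auto simp: lax_algebra_def tyurin_cond_iff_local in_coord_def intro: in_lie_comm
        holomorphic_at_comm[OF surf] meromorphic_at_comm[OF surf])
qed

lemma lax_algebra_diff:
  assumes L: "L \<in> lax_algebra atlas kd \<sigma> A K \<gamma> \<alpha> wc"
    and L': "L' \<in> lax_algebra atlas kd \<sigma> A K \<gamma> \<alpha> wc"
  shows "(\<lambda>x. L x - L' x) \<in> lax_algebra atlas kd \<sigma> A K \<gamma> \<alpha> wc"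
proof -
  have "tyurin_local kd \<sigma> (\<alpha> s) (\<lambda>\<zeta>. in_coord (wc s) L \<zeta> - in_coord (wc s) L' \<zeta>)"
    if "s \<in> {1..K}" for s
    using that by (intro tyurin_local_diff lax_algebraD(3)[OF L] lax_algebraD(3)[OF L'])
  then show ?thesis
    using lax_algebraD[OF L] lax_algebraD[OF L']
    by (auto simp: lax_algebra_def tyurin_cond_iff_local in_coord_def intro: in_lie_diff
        holomorphic_at_diff[OF surf] meromorphic_at_diff[OF surf])
qed

lemma lax_filt_comm:
  assumes "L \<in> lax_filt atlas kd \<sigma> A K \<gamma> \<alpha> wc N zc m" "L' \<in> lax_filt atlas kd \<sigma> A K \<gamma> \<alpha> wc N zc k"
  shows "(\<lambda>x. comm (L x) (L' x)) \<in> lax_filt atlas kd \<sigma> A K \<gamma> \<alpha> wc N zc (m + k)"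
  using assms lax_algebra_comm ord0_ge_comm
  by (fastforce simp: lax_filt_def ord_ge_def in_coord_def)

lemma lax_filt_comm_Z:
  assumes zc: "\<And>q. q \<in> {1..N} \<Longrightarrow> local_coordinate_at atlas (P q) (zc q)"
    and Xk: "is_Z atlas kd \<sigma> A K \<gamma> \<alpha> wc N zc X k s Xk"
    and Ym: "is_Z atlas kd \<sigma> A K \<gamma> \<alpha> wc N zc Y m p Ym"
    and XYkm: "is_Z atlas kd \<sigma> A K \<gamma> \<alpha> wc N zc (comm X Y) (k + m) s XYkm"
  shows "(\<lambda>x. comm (Xk x) (Ym x) - (if s = p then XYkm x else 0))
           \<in> lax_filt atlas kd \<sigma> A K \<gamma> \<alpha> wc N zc (k + m + 1)"
proof -
  let ?L = "\<lambda>x. comm (Xk x) (Ym x) - (if s = p then XYkm x else 0)"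
  have "?L \<in> lax_algebra atlas kd \<sigma> A K \<gamma> \<alpha> wc"
    using Xk Ym XYkm lax_algebra_comm lax_algebra_diff
    by (cases "s = p") (auto simp: is_Z_def)
  moreover have "ord0_ge (in_coord (zc q) ?L) (k + m + 1)" if q: "q \<in> {1..N}" for q
  proof -
    define X' Y' where "X' = (if q = s then X else 0)" and "Y' = (if q = p then Y else 0)"
    have lead: "ord0_ge (\<lambda>\<zeta>. comm (in_coord (zc q) Xk \<zeta>) (in_coord (zc q) Ym \<zeta>)
        - cmat (\<zeta> powi (k + m)) (comm X' Y')) (k + m + 1)"
      unfolding X'_def Y'_def using Xk Ym by (intro ord0_ge_comm_leading is_Z_local[OF zc q])
    show ?thesis
    proof (cases "s = p")
      case True
      then have "comm X' Y' = (if q = s then comm X Y else 0)"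
        by (simp add: X'_def Y'_def)
      then have "ord0_ge (\<lambda>\<zeta>. in_coord (zc q) XYkm \<zeta> - cmat (\<zeta> powi (k + m)) (comm X' Y'))
          (k + m + 1)"
        using is_Z_local[OF zc q XYkm] by simp
      with ord0_ge_diff[OF lead this] True show ?thesis
        by (elim ord0_ge_cong) (simp add: in_coord_def)
    next
      case False
      then have "comm X' Y' = 0"
        by (simp add: X'_def Y'_def)
      with lead False show ?thesis
        by (simp add: in_coord_def)
    qed
  qed
  ultimately show ?thesis
    by (simp add: lax_filt_def ord_ge_def)
qed

end
theorem proposition3p11:
  fixes atlas :: "('s::t2_space set \<times> ('s \<Rightarrow> complex)) set"
    and kd :: lie_kind and \<sigma> :: "'n::finite mat"
    and N M K :: nat and P Q \<gamma> :: "nat \<Rightarrow> 's" and \<alpha> :: "nat \<Rightarrow> complex^'n"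
    and zc wc :: "nat \<Rightarrow> 's set \<times> ('s \<Rightarrow> complex)"
  defines "A \<equiv> P ` {1..N} \<union> Q ` {1..M}"
  assumes surf: "compact_riemann_surface atlas"
    and NM: "N \<ge> 1" "M \<ge> 1"
    and inj_P: "inj_on P {1..N}" and inj_Q: "inj_on Q {1..M}"
    and IO_disj: "P ` {1..N} \<inter> Q ` {1..M} = {}"
    and inj_\<gamma>: "inj_on \<gamma> {1..K}" and W_disj: "\<gamma> ` {1..K} \<inter> A = {}"
    and sp_\<sigma>: "kd = SP \<Longrightarrow> transpose \<sigma> = - \<sigma> \<and> invertible \<sigma>"
    and so_\<alpha>: "kd = SO \<Longrightarrow> \<forall>s\<in>{1..K}. bil (\<alpha> s) (\<alpha> s) = 0"
    and wc: "\<forall>s\<in>{1..K}. local_coordinate_at atlas (\<gamma> s) (wc s)"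
    and zc: "\<forall>p\<in>{1..N}. local_coordinate_at atlas (P p) (zc p)"
  shows "(\<forall>m k L L'. L \<in> lax_filt atlas kd \<sigma> A K \<gamma> \<alpha> wc N zc m \<longrightarrow>
             L' \<in> lax_filt atlas kd \<sigma> A K \<gamma> \<alpha> wc N zc k \<longrightarrow>
             (\<lambda>x. comm (L x) (L' x)) \<in> lax_filt atlas kd \<sigma> A K \<gamma> \<alpha> wc N zc (m + k))
       \<and> (\<forall>X Y k m s p Xk Ym XYkm.
             in_lie kd \<sigma> X \<longrightarrow> in_lie kd \<sigma> Y \<longrightarrow> s \<in> {1..N} \<longrightarrow> p \<in> {1..N} \<longrightarrow>
             is_Z atlas kd \<sigma> A K \<gamma> \<alpha> wc N zc X k s Xk \<longrightarrow>
             is_Z atlas kd \<sigma> A K \<gamma> \<alpha> wc N zc Y m p Ym \<longrightarrow>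
             is_Z atlas kd \<sigma> A K \<gamma> \<alpha> wc N zc (comm X Y) (k + m) s XYkm \<longrightarrow>
             (\<lambda>x. comm (Xk x) (Ym x) - (if s = p then XYkm x else 0))
               \<in> lax_filt atlas kd \<sigma> A K \<gamma> \<alpha> wc N zc (k + m + 1))"
proof -
  interpret lax_data atlas kd \<sigma> A K \<gamma> \<alpha> wc
    using surf wc sp_\<sigma> so_\<alpha> by unfold_locales (auto simp: A_def)
  show ?thesis
    using lax_filt_comm lax_filt_comm_Z[of N P zc] zc by blast
qed

end
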